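(* Let $1\le p<\infty$ and let $v=(v_n)_{n\in\mathbb{N}}$ be a sequence of positive numbers with $\sup_{n\in\mathbb{N}}v_{n+1}/v_n<\infty$, so that the forward shift $F(x_1,x_2,x_3,\dots)=(0,x_1,x_2,\dots)$ is a bounded operator on $\ell^p(\mathbb{N},v)$. Then the following are equivalent: (a) $F$ is distributionally chaotic; (b) $F$ is densely distributionally chaotic; (c) there exist finite nonempty subsets $S_k\subset\mathbb{N}$ ($k\in\mathbb{N}$) such that: (i) there exists $A\subseteq\mathbb{N}$ with $\overline{\mathrm{dens}}(A)=1$ such that $\lim_{n\in A}v_n=0$; (ii) there exist $\varepsilon>0$, an increasing sequence $(N_k)$ in $\mathbb{N}$ and nonzero complex numbers $(C_{k,j})_{k\in\mathbb{N},j\in S_k}$ such that for every $k\in\mathbb{N}$ \[\operatorname{card}\Big\{1\le n\le N_k:\ \frac{\sum_{j\in S_k}|C_{k,j}|\,v_{n+j}}{\sum_{j\in S_k}|C_{k,j}|\,v_j}\ge k\Big\}\ge N_k\varepsilon.\]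
   Context: $\ell^p(\mathbb{N},v)=\{(x_n)_{n\in\mathbb{N}}:\sum_{n\ge1}|x_n|^pv_n<\infty\}$ with norm $(\sum_n|x_n|^pv_n)^{1/p}$. For $A\subseteq\mathbb{N}$, $\overline{\mathrm{dens}}(A)=\limsup_{N}\frac{\operatorname{card}(A\cap[1,N])}{N}$, $\underline{\mathrm{dens}}(A)=\liminf_{N}\frac{\operatorname{card}(A\cap[1,N])}{N}$. An operator $T$ on a Banach space $Y$ is distributionally chaotic if there exist an uncountable $\Gamma\subset Y$ and $\varepsilon>0$ such that for every $\delta>0$ and distinct $x,y\in\Gamma$: $\underline{\mathrm{dens}}\{j:\|T^jx-T^jy\|<\varepsilon\}=0$ and $\overline{\mathrm{dens}}\{j:\|T^jx-T^jy\|<\delta\}=1$; densely distributionally chaotic if $\Gamma$ can be chosen dense. *)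

theory Defs
  imports "HOL-Analysis.Analysis"
begin

text \<open>Natural numbers \<open>\<nat> = {1,2,3,...}\<close> are modelled by \<open>nat\<close>; index 0 is unused.
  Sequences are functions \<open>nat \<Rightarrow> complex\<close> with value 0 at index 0.\<close>

definition upper_dens :: "nat set \<Rightarrow> ereal" where
  "upper_dens A = limsup (\<lambda>N. ereal (real (card (A \<inter> {1..N})) / real N))"

definition lower_dens :: "nat set \<Rightarrow> ereal" where
  "lower_dens A = liminf (\<lambda>N. ereal (real (card (A \<inter> {1..N})) / real N))"

definition lp_space :: "real \<Rightarrow> (nat \<Rightarrow> real) \<Rightarrow> (nat \<Rightarrow> complex) set" where
  "lp_space p v = {x. x 0 = 0 \<and> summable (\<lambda>n. cmod (x n) powr p * v n)}"

definition lp_norm :: "real \<Rightarrow> (nat \<Rightarrow> real) \<Rightarrow> (nat \<Rightarrow> complex) \<Rightarrow> real" where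
  "lp_norm p v x = (\<Sum>n. cmod (x n) powr p * v n) powr (1 / p)"

definition fwd_shift :: "(nat \<Rightarrow> complex) \<Rightarrow> (nat \<Rightarrow> complex)" where
  "fwd_shift x = (\<lambda>n. if n \<le> 1 then 0 else x (n - 1))"

definition dc_set :: "((nat \<Rightarrow> complex) \<Rightarrow> (nat \<Rightarrow> complex)) \<Rightarrow> ((nat \<Rightarrow> complex) \<Rightarrow> real)
    \<Rightarrow> (nat \<Rightarrow> complex) set \<Rightarrow> real \<Rightarrow> bool" where
  "dc_set T nrm \<Gamma> \<epsilon> \<longleftrightarrow> uncountable \<Gamma> \<and> \<epsilon> > 0 \<and>
     (\<forall>\<delta>>0. \<forall>x\<in>\<Gamma>. \<forall>y\<in>\<Gamma>. x \<noteq> y \<longrightarrow>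
        lower_dens {j. nrm ((T ^^ j) x - (T ^^ j) y) < \<epsilon>} = 0 \<and>
        upper_dens {j. nrm ((T ^^ j) x - (T ^^ j) y) < \<delta>} = 1)"

definition distr_chaotic :: "(nat \<Rightarrow> complex) set \<Rightarrow> ((nat \<Rightarrow> complex) \<Rightarrow> (nat \<Rightarrow> complex))
    \<Rightarrow> ((nat \<Rightarrow> complex) \<Rightarrow> real) \<Rightarrow> bool" where
  "distr_chaotic Y T nrm \<longleftrightarrow> (\<exists>\<Gamma> \<epsilon>. \<Gamma> \<subseteq> Y \<and> dc_set T nrm \<Gamma> \<epsilon>)"

definition densely_distr_chaotic :: "(nat \<Rightarrow> complex) set \<Rightarrow> ((nat \<Rightarrow> complex) \<Rightarrow> (nat \<Rightarrow> complex))
    \<Rightarrow> ((nat \<Rightarrow> complex) \<Rightarrow> real) \<Rightarrow> bool" where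
  "densely_distr_chaotic Y T nrm \<longleftrightarrow> (\<exists>\<Gamma> \<epsilon>. \<Gamma> \<subseteq> Y \<and> dc_set T nrm \<Gamma> \<epsilon> \<and>
      (\<forall>x\<in>Y. \<forall>e>0. \<exists>y\<in>\<Gamma>. nrm (x - y) < e))"

end

theory Submission
  imports Defs
begin

text \<open>Write \<open>orbit_pnorm p v z j = (\<Sum>m. cmod (z m) powr p * v (m + j))\<close>, the \<open>p\<close>-th power of the
  norm of \<open>F^j z\<close>. A pair \<open>x \<noteq> y\<close> is distributionally chaotic exactly when the orbit of \<open>x - y\<close>
  is arbitrarily small on sets of upper density one and bounded below on a set of upper density
  one.

  Necessity: a coordinate \<open>z m \<noteq> 0\<close> of such a vector \<open>z\<close> bounds \<open>v (m + j)\<close> by the orbit at time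
  \<open>j\<close>, which gives (i) after a diagonal argument; for (ii), take a time \<open>m\<close> at which the orbit of \<open>z\<close>
  is tiny and use as coefficients the values \<open>cmod (z i) powr p\<close> of a truncation of \<open>z\<close>, shifted by
  \<open>m\<close>.

  Sufficiency: (ii) and a sweeping argument on level sets give, for every \<open>K\<close>, some \<open>k\<close> and a long
  window on which \<open>\<Sum>j\<in>S k. cmod (C k j) * v (s + n + j)\<close> exceeds \<open>K\<close> times its value at \<open>n = 0\<close>.
  Gluing suitably scaled copies of such blocks, each too small to disturb the orbit at earlier
  times, while (i) keeps the orbit small along \<open>A\<close>, produces a vector \<open>x\<close> such that \<open>u + c x\<close> is
  irregular for all finitely supported \<open>u\<close> and \<open>c \<noteq> 0\<close>. The vectors \<open>t x\<close> with \<open>1 < t < 2\<close>,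
  together with \<open>u\<^sub>q + t\<^sub>q x\<close> for an enumeration \<open>u\<^sub>q\<close> of the finitely supported Gaussian-rational
  vectors and distinct \<open>t\<^sub>q \<rightarrow> 0\<close>, then form a dense uncountable scrambled set.\<close>

lemma funpow_growth_bound:
  fixes f :: "nat \<Rightarrow> real"
  assumes "\<And>t. t0 \<le> t \<Longrightarrow> f (Suc t) \<le> M * f t" and "0 \<le> M" and "t0 \<le> t"
  shows "f (t + d) \<le> M ^ d * f t"
proof (induction d)
  case (Suc d)
  have "f (t + Suc d) \<le> M * f (t + d)"
    using assms(1)[of "t + d"] assms(3) by simp
  also have "\<dots> \<le> M * (M ^ d * f t)"
    using Suc assms(2) by (rule mult_left_mono)
  finally show ?case by simp
qed simp

lemma sum_inverse_two_powers_le: "(\<Sum>k\<in>{i..<T}. 1 / 2 ^ (k + 1) :: real) \<le> 1 / 2 ^ i"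
proof (cases "i \<le> T")
  case True
  have "(\<Sum>k\<in>{i..<T'}. 1 / 2 ^ (k + 1) :: real) = 1 / 2 ^ i - 1 / 2 ^ T'" if "i \<le> T'" for T'
    using that
  proof (induction T' rule: dec_induct)
    case (step T')
    have "(\<Sum>k\<in>{i..<Suc T'}. 1 / 2 ^ (k + 1) :: real) = (\<Sum>k\<in>{i..<T'}. 1 / 2 ^ (k + 1)) + 1 / 2 ^ (T' + 1)"
      using step by simp
    also have "\<dots> = 1 / 2 ^ i - 1 / 2 ^ T' + 1 / 2 ^ (T' + 1)"
      using step by simp
    also have "\<dots> = 1 / 2 ^ i - 1 / 2 ^ Suc T'"
      by (simp add: field_simps)
    finally show ?case .
  qed simp
  then show ?thesis using True by simp
qed simp

lemma powr_inverse_less_iff: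
  fixes a d q :: real
  assumes "0 < q" "0 \<le> a" "0 < d"
  shows "a powr (1 / q) < d \<longleftrightarrow> a < d powr q"
proof
  assume "a powr (1 / q) < d"
  then have "(a powr (1 / q)) powr q < d powr q"
    using assms by (intro powr_less_mono2) auto
  then show "a < d powr q"
    using assms by (simp add: powr_powr)
next
  assume "a < d powr q"
  then have "a powr (1 / q) < (d powr q) powr (1 / q)"
    using assms by (intro powr_less_mono2) auto
  then show "a powr (1 / q) < d"
    using assms by (simp add: powr_powr)
qed

lemma powr_add_le_two_powr:
  fixes a b q :: real
  assumes "0 \<le> a" "0 \<le> b" "0 < q"
  shows "(a + b) powr q \<le> 2 powr q * (a powr q + b powr q)"
proof -
  have "(a + b) powr q \<le> (2 * max a b) powr q"
    using assms by (intro powr_mono2) auto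
  also have "\<dots> = 2 powr q * max a b powr q"
    using assms by (simp add: powr_mult)
  also have "\<dots> \<le> 2 powr q * (a powr q + b powr q)"
    by (intro mult_left_mono) (auto simp: max_def)
  finally show ?thesis .
qed

lemma obtain_strict_mono_witnesses:
  assumes "\<And>k N0. \<exists>N\<ge>N0. P k N"
  obtains N :: "nat \<Rightarrow> nat" where "strict_mono N" "\<And>k. P k (N k)"
proof -
  have "\<forall>k N0. \<exists>N. N0 \<le> N \<and> P k N"
    using assms by blast
  then obtain f where f: "\<And>k N0. N0 \<le> f k N0 \<and> P k (f k N0)"
    by metis
  define N where "N = rec_nat (f 0 0) (\<lambda>k prev. f (Suc k) (Suc prev))"
  have N_Suc: "N (Suc k) = f (Suc k) (Suc (N k))" for k
    by (simp add: N_def)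
  show thesis
  proof
    show "strict_mono N"
      using f by (intro strict_monoI_Suc) (metis N_Suc Suc_le_eq)
    show "P k (N k)" for k
      using f by (cases k) (simp_all add: N_def)
  qed
qed

text \<open>The finitely supported sequences with Gaussian-rational entries, encoded by lists so that
  they can be enumerated.\<close>

definition embed_rat_list :: "(rat \<times> rat) list \<Rightarrow> nat \<Rightarrow> complex" where
  "embed_rat_list l m = (if 1 \<le> m \<and> m \<le> length l
     then Complex (of_rat (fst (l ! (m - 1)))) (of_rat (snd (l ! (m - 1)))) else 0)"

lemma complex_rat_approx:
  assumes "0 < r"
  shows "\<exists>q :: rat \<times> rat. cmod (w - Complex (of_rat (fst q)) (of_rat (snd q))) < r"
proof -
  obtain a where a: "a \<in> \<rat>" "Re w - r / 2 < a" "a < Re w + r / 2"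
    using Rats_dense_in_real[of "Re w - r / 2" "Re w + r / 2"] assms by auto
  obtain b where b: "b \<in> \<rat>" "Im w - r / 2 < b" "b < Im w + r / 2"
    using Rats_dense_in_real[of "Im w - r / 2" "Im w + r / 2"] assms by auto
  obtain qa qb where "a = of_rat qa" "b = of_rat qb"
    using a(1) b(1) by (auto elim!: Rats_cases)
  moreover have "cmod (w - Complex a b) \<le> \<bar>Re (w - Complex a b)\<bar> + \<bar>Im (w - Complex a b)\<bar>"
    by (rule cmod_le)
  moreover have "\<bar>Re (w - Complex a b)\<bar> + \<bar>Im (w - Complex a b)\<bar> < r"
    using a b by auto
  ultimately show ?thesis
    by (intro exI[of _ "(qa, qb)"]) auto
qed

lemma embed_rat_list_approx:
  assumes "\<And>m. 0 < r m"
  shows "\<exists>l. length l = U \<and> (\<forall>m\<in>{1..U}. cmod (y m - embed_rat_list l m) < r m)"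
proof -
  have "\<forall>m. \<exists>q. cmod (y m - Complex (of_rat (fst q)) (of_rat (snd q))) < r m"
    using complex_rat_approx[OF assms] by blast
  from choice[OF this] obtain g where g: "\<And>m. cmod (y m - Complex (of_rat (fst (g m))) (of_rat (snd (g m)))) < r m"
    by blast
  define l where "l = map (\<lambda>i. g (Suc i)) [0..<U]"
  have "embed_rat_list l m = Complex (of_rat (fst (g m))) (of_rat (snd (g m)))" if "m \<in> {1..U}" for m
  proof -
    have "m - 1 < U" "Suc (m - 1) = m" using that by auto
    then have "l ! (m - 1) = g m" by (simp add: l_def)
    then show ?thesis using that by (simp add: embed_rat_list_def l_def)
  qed
  then show ?thesis
    using g by (intro exI[of _ l]) (simp add: l_def)
qed

section \<open>Upper and lower density\<close>

lemma card_Int_atLeastAtMost_le: "card (A \<inter> {1..N}) \<le> N"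
  using card_mono[of "{1..N}" "A \<inter> {1..N}"] by auto

lemma card_Int_le_card_greaterThanAtMost: "card (A \<inter> {1..N}) \<le> card (A \<inter> {m<..N}) + m"
proof -
  have "card (A \<inter> {1..N}) \<le> card (A \<inter> {m<..N} \<union> {1..m})"
    by (intro card_mono) auto
  also have "\<dots> \<le> card (A \<inter> {m<..N}) + m"
    using card_Un_le[of "A \<inter> {m<..N}" "{1..m}"] by simp
  finally show ?thesis .
qed

lemma density_ratio_bounds: "0 \<le> real (card (A \<inter> {1..N})) / real N" "real (card (A \<inter> {1..N})) / real N \<le> 1"
  using card_Int_atLeastAtMost_le[of A N] by (auto simp: divide_le_eq)

lemma upper_dens_le_1: "upper_dens A \<le> 1"
  unfolding upper_dens_def by (rule Limsup_bounded) (use density_ratio_bounds in auto)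

lemma upper_dens_nonneg: "0 \<le> upper_dens A"
  unfolding upper_dens_def by (rule le_Limsup) (use density_ratio_bounds in auto)

lemma upper_dens_le_card:
  "(\<And>N. card (A \<inter> {1..N}) \<le> card (B \<inter> {1..N})) \<Longrightarrow> upper_dens A \<le> upper_dens B"
  unfolding upper_dens_def
  by (intro Limsup_mono always_eventually allI ereal_less_eq(3)[THEN iffD2] divide_right_mono) auto

lemma upper_dens_mono: "A \<subseteq> B \<Longrightarrow> upper_dens A \<le> upper_dens B"
  by (rule upper_dens_le_card) (auto intro: card_mono)

lemma upper_dens_eq_1_mono: "upper_dens A = 1 \<Longrightarrow> A \<subseteq> B \<Longrightarrow> upper_dens B = 1"
  using upper_dens_mono[of A B] upper_dens_le_1[of B] by simp

lemma upper_dens_eq_1_nonempty: "upper_dens A = 1 \<Longrightarrow> A \<noteq> {}"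
  by (auto simp: upper_dens_def Limsup_const)

lemma lower_dens_compl: "lower_dens (- A) = 1 - upper_dens A"
proof -
  have "eventually (\<lambda>N. ereal (real (card (- A \<inter> {1..N})) / real N)
      = 1 - ereal (real (card (A \<inter> {1..N})) / real N)) sequentially"
    unfolding eventually_sequentially
  proof (intro exI allI impI)
    fix N :: nat assume "1 \<le> N"
    have "card (- A \<inter> {1..N}) + card (A \<inter> {1..N}) = N"
      using card_Un_disjoint[of "- A \<inter> {1..N}" "A \<inter> {1..N}"] by (simp add: Int_Un_distrib2[symmetric])
    then have "real (card (- A \<inter> {1..N})) / real N = 1 - real (card (A \<inter> {1..N})) / real N"
      using \<open>1 \<le> N\<close> by (simp add: field_simps flip: of_nat_add)
    then show "ereal (real (card (- A \<inter> {1..N})) / real N) = 1 - ereal (real (card (A \<inter> {1..N})) / real N)"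
      by (simp add: one_ereal_def)
  qed
  then show ?thesis
    unfolding lower_dens_def upper_dens_def by (simp add: Liminf_eq liminf_ereal_cminus)
qed

lemma lower_dens_eq_0_iff: "lower_dens A = 0 \<longleftrightarrow> upper_dens (- A) = 1"
proof -
  obtain r where "upper_dens (- A) = ereal r"
    using upper_dens_le_1[of "- A"] upper_dens_nonneg[of "- A"] by (cases "upper_dens (- A)") auto
  then show ?thesis
    using lower_dens_compl[of "- A"] by (simp add: one_ereal_def)
qed

lemma card_Int_lower_bound:
  assumes "X \<subseteq> {1..P}" "X \<inter> {n0<..} \<subseteq> T" "Suc i \<le> P"
    and "(1 - 1 / real (Suc i)) * real P \<le> real (card X)"
  shows "(1 - real (Suc n0) / real (Suc i)) * real P \<le> real (card (T \<inter> {1..P}))"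
proof -
  have "card (X \<inter> {n0<..P}) \<le> card (T \<inter> {1..P})"
    using assms(1,2) by (intro card_mono) auto
  moreover have "card (X \<inter> {1..P}) \<le> card (X \<inter> {n0<..P}) + n0"
    by (rule card_Int_le_card_greaterThanAtMost)
  moreover have "X \<inter> {1..P} = X" using assms(1) by auto
  ultimately have "real (card X) \<le> real (card (T \<inter> {1..P})) + real n0"
    by (simp flip: of_nat_add)
  moreover have "real n0 * real (Suc i) \<le> real n0 * real P"
    using assms(3) by (intro mult_left_mono) auto
  then have "real n0 \<le> real n0 * real P / real (Suc i)"
    by (simp add: field_simps)
  moreover have "(1 - real (Suc n0) / real (Suc i)) * real P
      = (1 - 1 / real (Suc i)) * real P - real n0 * real P / real (Suc i)"
    by (simp add: add_divide_distrib diff_divide_distrib algebra_simps)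
  ultimately show ?thesis
    using assms(4) by linarith
qed

lemma upper_dens_eq_1_iff:
  "upper_dens A = 1 \<longleftrightarrow> (\<forall>\<eta>>0. \<forall>N0. \<exists>N\<ge>N0. (1 - \<eta>) * real N \<le> real (card (A \<inter> {1..N})))"
proof
  assume A: "upper_dens A = 1"
  show "\<forall>\<eta>>0. \<forall>N0. \<exists>N\<ge>N0. (1 - \<eta>) * real N \<le> real (card (A \<inter> {1..N}))"
  proof (intro allI impI, rule ccontr)
    fix \<eta> :: real and N0
    assume "\<eta> > 0" and none: "\<not> (\<exists>N\<ge>N0. (1 - \<eta>) * real N \<le> real (card (A \<inter> {1..N})))"
    have "\<forall>N\<ge>N0 + 1. ereal (real (card (A \<inter> {1..N})) / real N) \<le> ereal (1 - \<eta>)"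
    proof (intro allI impI)
      fix N assume N: "N \<ge> N0 + 1"
      then have "real (card (A \<inter> {1..N})) < (1 - \<eta>) * real N"
        using none by (meson add_leD1 not_le)
      with N show "ereal (real (card (A \<inter> {1..N})) / real N) \<le> ereal (1 - \<eta>)"
        by (simp add: divide_le_eq)
    qed
    then have "upper_dens A \<le> ereal (1 - \<eta>)"
      unfolding upper_dens_def by (intro Limsup_bounded) (auto simp: eventually_sequentially)
    with A \<open>\<eta> > 0\<close> show False by (simp add: one_ereal_def)
  qed
next
  assume H: "\<forall>\<eta>>0. \<forall>N0. \<exists>N\<ge>N0. (1 - \<eta>) * real N \<le> real (card (A \<inter> {1..N}))"
  show "upper_dens A = 1"
  proof (rule antisym[OF upper_dens_le_1], rule ccontr)
    assume "\<not> 1 \<le> upper_dens A"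
    then obtain r where r: "upper_dens A = ereal r" "r < 1"
      using upper_dens_nonneg[of A] by (cases "upper_dens A") auto
    then have "upper_dens A < ereal ((1 + r) / 2)" by simp
    then have "eventually (\<lambda>N. ereal (real (card (A \<inter> {1..N})) / real N) < ereal ((1 + r) / 2)) sequentially"
      unfolding upper_dens_def by (rule Limsup_lessD)
    then obtain N0 where N0: "\<And>N. N \<ge> N0 \<Longrightarrow> real (card (A \<inter> {1..N})) / real N < (1 + r) / 2"
      unfolding eventually_sequentially by auto
    obtain N where N: "N \<ge> N0 + 1" "(1 - (1 - r) / 2) * real N \<le> real (card (A \<inter> {1..N}))"
      using H r(2) by (meson diff_gt_0_iff_gt half_gt_zero)
    then have "1 - (1 - r) / 2 \<le> real (card (A \<inter> {1..N})) / real N"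
      by (simp add: le_divide_eq)
    with N0[of N] N(1) show False by (simp add: field_simps)
  qed
qed

lemma upper_dens_eq_1I:
  assumes "\<And>i. i \<le> N i"
    and "eventually (\<lambda>i. (1 - e i) * real (N i) \<le> real (card (A \<inter> {1..N i}))) sequentially"
    and "e \<longlonglongrightarrow> 0"
  shows "upper_dens A = 1"
  unfolding upper_dens_eq_1_iff
proof (intro allI impI)
  fix \<eta> :: real and N0 assume "\<eta> > 0"
  then have "eventually (\<lambda>i. e i < \<eta>) sequentially"
    by (rule order_tendstoD(2)[OF assms(3)])
  with assms(2) obtain i0 where i0: "\<And>i. i \<ge> i0 \<Longrightarrow> e i < \<eta> \<and> (1 - e i) * real (N i) \<le> real (card (A \<inter> {1..N i}))"
    unfolding eventually_sequentially by (metis (no_types, lifting) eventually_conj eventually_sequentially)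
  define i where "i = max i0 N0"
  have "(1 - \<eta>) * real (N i) \<le> (1 - e i) * real (N i)"
    using i0[of i] by (intro mult_right_mono) (auto simp: i_def)
  also have "\<dots> \<le> real (card (A \<inter> {1..N i}))"
    using i0[of i] by (simp add: i_def)
  finally show "\<exists>N'\<ge>N0. (1 - \<eta>) * real N' \<le> real (card (A \<inter> {1..N'}))"
    using assms(1)[of i] by (intro exI[of _ "N i"]) (auto simp: i_def)
qed

lemma upper_dens_eq_1_tail:
  assumes "upper_dens A = 1" shows "upper_dens (A \<inter> {m<..}) = 1"
  unfolding upper_dens_eq_1_iff
proof (intro allI impI)
  fix \<eta> :: real and N0 assume "\<eta> > 0"
  then obtain N where N: "N \<ge> max N0 (nat \<lceil>2 * real m / \<eta>\<rceil>)"
      "(1 - \<eta> / 2) * real N \<le> real (card (A \<inter> {1..N}))"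
    using assms unfolding upper_dens_eq_1_iff by (meson half_gt_zero)
  have "real m \<le> \<eta> / 2 * real N"
    using N(1) \<open>\<eta> > 0\<close> by (auto simp: field_simps dest!: order.trans[OF real_nat_ceiling_ge])
  moreover have "A \<inter> {m<..N} \<subseteq> A \<inter> {m<..} \<inter> {1..N}" by auto
  then have "card (A \<inter> {m<..N}) \<le> card (A \<inter> {m<..} \<inter> {1..N})" by (intro card_mono) auto
  ultimately have "(1 - \<eta>) * real N \<le> real (card (A \<inter> {m<..} \<inter> {1..N}))"
    using N(2) card_Int_le_card_greaterThanAtMost[of A N m] by (simp add: algebra_simps)
  then show "\<exists>N\<ge>N0. (1 - \<eta>) * real N \<le> real (card (A \<inter> {m<..} \<inter> {1..N}))"
    using N(1) by auto
qed

lemma upper_dens_eq_1_shift: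
  assumes "upper_dens A = 1" shows "upper_dens ((+) m ` A) = 1"
  unfolding upper_dens_eq_1_iff
proof (intro allI impI)
  fix \<eta> :: real and N0 assume "\<eta> > 0"
  then obtain N where N: "N \<ge> max N0 (nat \<lceil>2 * real m / \<eta>\<rceil>)"
      "(1 - \<eta> / 2) * real N \<le> real (card (A \<inter> {1..N}))"
    using assms unfolding upper_dens_eq_1_iff by (meson half_gt_zero)
  have m: "real m \<le> \<eta> / 2 * real N"
    using N(1) \<open>\<eta> > 0\<close> by (auto simp: field_simps dest!: order.trans[OF real_nat_ceiling_ge])
  have "card (A \<inter> {1..N}) = card ((+) m ` (A \<inter> {1..N}))"
    by (simp add: card_image)
  also have "\<dots> \<le> card ((+) m ` A \<inter> {1..N + m})"
    by (intro card_mono) auto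
  finally have "(1 - \<eta> / 2) * real N \<le> real (card ((+) m ` A \<inter> {1..N + m}))"
    using N(2) by linarith
  moreover have "(1 - \<eta>) * real (N + m) \<le> (1 - \<eta> / 2) * real N"
  proof -
    have "(1 - \<eta>) * real (N + m) = (1 - \<eta> / 2) * real N - (\<eta> / 2 * real N - real m) - \<eta> * real m"
      by (simp add: algebra_simps)
    moreover have "0 \<le> \<eta> * real m" using \<open>\<eta> > 0\<close> by simp
    ultimately show ?thesis using m by linarith
  qed
  ultimately show "\<exists>N'\<ge>N0. (1 - \<eta>) * real N' \<le> real (card ((+) m ` A \<inter> {1..N'}))"
    using N(1) by (intro exI[of _ "N + m"]) auto
qed

lemma upper_dens_eq_1_shift_left:
  assumes "upper_dens G = 1" shows "upper_dens {n. n + m \<in> G} = 1"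
proof -
  have "card (G \<inter> {m<..} \<inter> {1..N}) \<le> card ({n. n + m \<in> G} \<inter> {1..N})" for N
  proof -
    have "inj_on (\<lambda>t. t - m) (G \<inter> {m<..} \<inter> {1..N})" by (auto simp: inj_on_def)
    moreover have "(\<lambda>t. t - m) ` (G \<inter> {m<..} \<inter> {1..N}) \<subseteq> {n. n + m \<in> G} \<inter> {1..N}" by auto
    ultimately show ?thesis by (simp add: card_inj_on_le)
  qed
  then have "upper_dens (G \<inter> {m<..}) \<le> upper_dens {n. n + m \<in> G}"
    by (rule upper_dens_le_card)
  then show ?thesis
    using upper_dens_eq_1_tail[OF assms] upper_dens_le_1[of "{n. n + m \<in> G}"] by simp
qed

lemma upper_dens_eq_1_diagonal:
  assumes dens: "\<And>i. upper_dens (X i) = 1" and dec: "\<And>i. X (Suc i) \<subseteq> X i"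
  obtains A where "upper_dens A = 1" "A \<subseteq> X 0" "\<And>i. \<exists>n0. \<forall>n\<in>A. n0 \<le> n \<longrightarrow> n \<in> X i"
proof -
  let ?P = "\<lambda>i N. (1 - 1 / real (Suc i)) * real N \<le> real (card (X i \<inter> {1..N}))"
  have "\<exists>N\<ge>N0. ?P i N" for i N0
    using dens[of i] unfolding upper_dens_eq_1_iff by simp
  then obtain N where N: "strict_mono N" "\<And>i. ?P i (N i)"
    using obtain_strict_mono_witnesses[of ?P] by blast
  have anti: "X j \<subseteq> X i" if "i \<le> j" for i j
    using that by (rule lift_Suc_antimono_le[of X, OF dec])
  define A where "A = (\<Union>i. X i \<inter> {1..N i})"
  show thesis
  proof
    have "(1 - 1 / real (Suc i)) * real (N i) \<le> real (card (A \<inter> {1..N i}))" for i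
      using N(2)[of i] card_mono[of "A \<inter> {1..N i}" "X i \<inter> {1..N i}"] unfolding A_def by force
    then show "upper_dens A = 1"
      using strict_mono_imp_increasing[OF N(1)] lim_const_over_n LIMSEQ_Suc
      by (intro upper_dens_eq_1I[where N = N and e = "\<lambda>i. 1 / real (Suc i)"]) fastforce+
    show "A \<subseteq> X 0"
      unfolding A_def using anti by blast
    show "\<exists>n0. \<forall>n\<in>A. n0 \<le> n \<longrightarrow> n \<in> X i" for i
    proof (intro exI ballI impI)
      fix n assume "n \<in> A" and "Suc (N i) \<le> n"
      then obtain j where "n \<in> X j" "n \<le> N j" unfolding A_def by auto
      with \<open>Suc (N i) \<le> n\<close> have "i < j"
        using N(1) by (metis Suc_le_lessD linorder_not_less order.strict_trans1 strict_mono_less_eq)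
      with \<open>n \<in> X j\<close> show "n \<in> X i" using anti[of i j] by auto
    qed
  qed
qed

section \<open>Long windows of growth\<close>

definition hits :: "nat set \<Rightarrow> nat \<Rightarrow> nat \<Rightarrow> nat" where
  "hits X s L = card {n \<in> {1..L}. s + n \<in> X}"

lemma hits_0 [simp]: "hits X s 0 = 0"
  by (simp add: hits_def)

lemma hits_Suc: "hits X s (Suc L) = hits X s L + (if s + Suc L \<in> X then 1 else 0)"
proof -
  have "{n \<in> {1..Suc L}. s + n \<in> X} = {n \<in> {1..L}. s + n \<in> X} \<union> (if s + Suc L \<in> X then {Suc L} else {})"
    by (auto simp: le_Suc_eq)
  then show ?thesis
    unfolding hits_def by (auto simp: card_insert_if)
qed

lemma hits_add: "hits X s (a + m) = hits X s a + hits X (s + a) m"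
  by (induction m) (auto simp: hits_Suc add.assoc)

lemma hits_le: "hits X s L \<le> L"
proof -
  have "hits X s L \<le> card {1..L}"
    unfolding hits_def by (intro card_mono) auto
  then show ?thesis by simp
qed

lemma hits_split:
  assumes "q \<in> {1..len}"
  shows "hits X s len = hits X s (q - 1) + (if s + q \<in> X then 1 else 0) + hits X (s + q) (len - q)"
proof -
  have "len = (q - 1) + (Suc 0 + (len - q))" using assms by auto
  then have "hits X s len = hits X s (q - 1) + hits X (s + (q - 1)) (Suc 0 + (len - q))"
    by (metis hits_add)
  also have "hits X (s + (q - 1)) (Suc 0 + (len - q))
      = hits X (s + (q - 1)) (Suc 0) + hits X (s + (q - 1) + Suc 0) (len - q)"
    by (rule hits_add)
  also have "hits X (s + (q - 1)) (Suc 0) = (if s + q \<in> X then 1 else 0)"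
    using assms by (simp add: hits_Suc)
  also have "s + (q - 1) + Suc 0 = s + q" using assms by auto
  finally show ?thesis by simp
qed

text \<open>Induction on the window length, splitting at the first point outside \<open>HI\<close>. A window
  inside \<open>HI\<close> is either long, and then \<open>sparse\<close> applies, or short, and then \<open>run\<close> shows that
  it contains no point of \<open>HS\<close>.\<close>

lemma hits_thinning:
  fixes HI HS :: "nat set"
  assumes "0 < \<eta>" "\<eta> < 1"
    and sub: "HS \<subseteq> HI"
    and run: "\<And>t d. t \<in> HS \<Longrightarrow> d \<le> R \<Longrightarrow> d \<le> t \<Longrightarrow> t - d \<in> HI"
    and sparse: "\<And>s L. b \<le> s \<Longrightarrow> s \<notin> HI \<Longrightarrow> R \<le> L \<Longrightarrow> real (hits HS s L) < (1 - \<eta>) * real L"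
  shows "b \<le> s \<Longrightarrow> s \<notin> HI \<Longrightarrow> real (hits HS s len) \<le> (1 - \<eta>) * real (hits HI s len)"
proof (induction len arbitrary: s rule: less_induct)
  case (less len)
  show ?case
  proof (cases "\<forall>d\<in>{1..len}. s + d \<in> HI")
    case True
    then have "{n \<in> {1..len}. s + n \<in> HI} = {1..len}" by auto
    then have full: "hits HI s len = len"
      unfolding hits_def by simp
    show ?thesis
    proof (cases "R \<le> len")
      case True
      then show ?thesis using sparse[of s len] less.prems full by auto
    next
      case False
      have "{n \<in> {1..len}. s + n \<in> HS} = {}"
      proof (rule ccontr)
        assume "{n \<in> {1..len}. s + n \<in> HS} \<noteq> {}"
        then obtain n where "n \<in> {1..len}" "s + n \<in> HS" by auto
        then have "s + n - n \<in> HI" using run[of "s + n" n] False by auto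
        then show False using less.prems by simp
      qed
      then have "hits HS s len = 0"
        unfolding hits_def by (metis card.empty)
      then show ?thesis using assms(2) by simp
    qed
  next
    case False
    define q where "q = (LEAST d. d \<in> {1..len} \<and> s + d \<notin> HI)"
    have "\<exists>d. d \<in> {1..len} \<and> s + d \<notin> HI" using False by auto
    from LeastI_ex[OF this] have q: "q \<in> {1..len}" "s + q \<notin> HI"
      unfolding q_def by auto
    have "real (hits HS s (q - 1)) \<le> (1 - \<eta>) * real (hits HI s (q - 1))"
      using less.IH[of "q - 1" s] less.prems q by auto
    moreover have "real (hits HS (s + q) (len - q)) \<le> (1 - \<eta>) * real (hits HI (s + q) (len - q))"
      using less.IH[of "len - q" "s + q"] less.prems q by auto
    moreover have "s + q \<notin> HS" using q sub by auto
    ultimately show ?thesis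
      using hits_split[OF q(1), of HS] hits_split[OF q(1), of HI] q(2) by (simp add: algebra_simps)
  qed
qed

lemma hits_levels_decay:
  fixes H :: "nat \<Rightarrow> nat set"
  assumes "0 < \<eta>" "\<eta> < 1"
    and "\<And>i. H (Suc i) \<subseteq> H i"
    and "\<And>i t d. t \<in> H (Suc i) \<Longrightarrow> d \<le> R \<Longrightarrow> d \<le> t \<Longrightarrow> t - d \<in> H i"
    and "\<And>i s L. b \<le> s \<Longrightarrow> s \<notin> H i \<Longrightarrow> R \<le> L \<Longrightarrow> real (hits (H (Suc i)) s L) < (1 - \<eta>) * real L"
    and "\<And>i. b \<notin> H i"
  shows "real (hits (H i) b N) \<le> (1 - \<eta>) ^ i * real N"
proof (induction i)
  case 0
  show ?case using hits_le[of "H 0" b N] by simp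
next
  case (Suc i)
  have "real (hits (H (Suc i)) b N) \<le> (1 - \<eta>) * real (hits (H i) b N)"
    using hits_thinning[of \<eta> "H (Suc i)" "H i" R b b N, OF assms(1-5)] assms(6) by simp
  also have "\<dots> \<le> (1 - \<eta>) * ((1 - \<eta>) ^ i * real N)"
    using Suc assms(2) by (intro mult_left_mono) auto
  finally show ?case by simp
qed

lemma growth_backward:
  fixes F :: "nat \<Rightarrow> real"
  assumes "\<And>t. 0 < F t" "\<And>t. F (Suc t) \<le> M * F t" "1 \<le> M" "0 < K" "M ^ R \<le> K"
    and "c * K \<le> F t" "d \<le> R" "d \<le> t"
  shows "c \<le> F (t - d)"
proof -
  have "c * K \<le> M ^ d * F (t - d)"
    using assms(6) funpow_growth_bound[of 0 F M "t - d" d] assms(2,3,8) by simp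
  also have "M ^ d \<le> K"
    using power_increasing[OF assms(7,3)] assms(5) by linarith
  then have "M ^ d * F (t - d) \<le> K * F (t - d)"
    using assms(1)[of "t - d"] by (intro mult_right_mono) auto
  finally show ?thesis
    using assms(4) by (simp add: mult.commute)
qed

text \<open>If no window of relative growth \<open>K\<close> existed, each level set \<open>{t. F b * K ^ (i + 1) \<le> F t}\<close>
  would fill at most a \<open>(1 - \<eta>)\<close>-fraction of the previous one.\<close>

lemma growth_window_exists:
  fixes F :: "nat \<Rightarrow> real"
  assumes F_pos: "\<And>t. 0 < F t" and F_growth: "\<And>t. F (Suc t) \<le> M * F t"
    and "1 \<le> M" and "1 < K" and "M ^ R \<le> K" and "0 < \<eta>" "\<eta> < 1"
    and large: "(1 - \<eta>) ^ I * real N < real (card {n \<in> {1..N}. F b * K ^ (I + 1) \<le> F (b + n)})"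
  obtains s L where "b \<le> s" "R \<le> L" "(1 - \<eta>) * real L \<le> real (card {n \<in> {1..L}. K * F s \<le> F (s + n)})"
proof (rule ccontr)
  assume "\<not> thesis"
  with that have no_window: "real (card {n \<in> {1..L}. K * F s \<le> F (s + n)}) < (1 - \<eta>) * real L"
    if "b \<le> s" "R \<le> L" for s L
    using \<open>b \<le> s\<close> \<open>R \<le> L\<close> by (meson not_le)
  define H where "H i = {t. F b * K ^ (i + 1) \<le> F t}" for i
  have K_pow: "F b * K ^ (i + 1) \<le> F b * K ^ (Suc i + 1)" for i
    using F_pos[of b] \<open>1 < K\<close> by (intro mult_left_mono power_increasing) auto
  have "real (hits (H I) b N) \<le> (1 - \<eta>) ^ I * real N"
  proof (rule hits_levels_decay[where R = R, OF \<open>0 < \<eta>\<close> \<open>\<eta> < 1\<close>])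
    show "H (Suc i) \<subseteq> H i" for i
      using K_pow[of i] by (auto simp: H_def)
    show "t - d \<in> H i" if "t \<in> H (Suc i)" "d \<le> R" "d \<le> t" for i t d
      using growth_backward[where F = F and c = "F b * K ^ (i + 1)", OF F_pos F_growth \<open>1 \<le> M\<close> _ \<open>M ^ R \<le> K\<close>]
        that \<open>1 < K\<close> by (simp add: H_def mult_ac)
    show "real (hits (H (Suc i)) s L) < (1 - \<eta>) * real L"
      if "b \<le> s" "s \<notin> H i" "R \<le> L" for i s L
    proof -
      have "{n \<in> {1..L}. s + n \<in> H (Suc i)} \<subseteq> {n \<in> {1..L}. K * F s \<le> F (s + n)}"
      proof safe
        fix n assume "s + n \<in> H (Suc i)"
        have "K * F s \<le> K * (F b * K ^ (i + 1))"
          using that(2) \<open>1 < K\<close> by (simp add: H_def)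
        also have "\<dots> \<le> F (s + n)"
          using \<open>s + n \<in> H (Suc i)\<close> by (simp add: H_def algebra_simps)
        finally show "K * F s \<le> F (s + n)" .
      qed
      then have "hits (H (Suc i)) s L \<le> card {n \<in> {1..L}. K * F s \<le> F (s + n)}"
        unfolding hits_def by (intro card_mono) auto
      moreover have "real (card {n \<in> {1..L}. K * F s \<le> F (s + n)}) < (1 - \<eta>) * real L"
        using no_window that by blast
      ultimately show ?thesis by linarith
    qed
    show "b \<notin> H i" for i
      using F_pos[of b] one_less_power[OF \<open>1 < K\<close>, of "i + 1"] by (simp add: H_def)
  qed
  moreover have "hits (H I) b N = card {n \<in> {1..N}. F b * K ^ (I + 1) \<le> F (b + n)}"
    unfolding hits_def H_def by simp
  ultimately show False
    using large by simp
qed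

section \<open>The weighted forward shift\<close>

lemma funpow_fwd_shift_diff: "(fwd_shift ^^ j) (x - y) = (fwd_shift ^^ j) x - (fwd_shift ^^ j) y"
  by (induction j) (auto simp: fwd_shift_def fun_eq_iff)

lemma funpow_fwd_shift_apply: "z 0 = 0 \<Longrightarrow> (fwd_shift ^^ j) z n = (if n \<le> j then 0 else z (n - j))"
  by (induction j arbitrary: n) (auto simp: fwd_shift_def)

definition orbit_pnorm :: "real \<Rightarrow> (nat \<Rightarrow> real) \<Rightarrow> (nat \<Rightarrow> complex) \<Rightarrow> nat \<Rightarrow> real" where
  "orbit_pnorm p v z j = (\<Sum>m. cmod (z m) powr p * v (m + j))"

locale weighted_shift =
  fixes p :: real and v :: "nat \<Rightarrow> real" and M :: real
  assumes p_ge_1: "1 \<le> p"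
    and v_pos: "\<And>n. 1 \<le> n \<Longrightarrow> 0 < v n"
    and M_ge_1: "1 \<le> M"
    and v_Suc_le: "\<And>n. 1 \<le> n \<Longrightarrow> v (Suc n) \<le> M * v n"
begin

lemma p_pos: "0 < p"
  using p_ge_1 by simp

lemma v_add_le: "1 \<le> n \<Longrightarrow> v (n + d) \<le> M ^ d * v n"
  using funpow_growth_bound[of 1 v M n d] v_Suc_le M_ge_1 by simp

lemma lp_space_zero: "z \<in> lp_space p v \<Longrightarrow> z 0 = 0"
  by (simp add: lp_space_def)

lemma orbit_term_nonneg: "z 0 = 0 \<Longrightarrow> 0 \<le> cmod (z m) powr p * v (m + j)"
  using v_pos[of "m + j"] by (cases m) auto

lemma summable_orbit_terms:
  assumes "z \<in> lp_space p v"
  shows "summable (\<lambda>m. cmod (z m) powr p * v (m + j))"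
proof (rule summable_comparison_test)
  show "summable (\<lambda>m. M ^ j * (cmod (z m) powr p * v m))"
    using assms by (auto simp: lp_space_def intro: summable_mult)
  have "norm (cmod (z n) powr p * v (n + j)) \<le> M ^ j * (cmod (z n) powr p * v n)" if "1 \<le> n" for n
  proof -
    have "norm (cmod (z n) powr p * v (n + j)) = cmod (z n) powr p * v (n + j)"
      using v_pos[of "n + j"] that by simp
    also have "\<dots> \<le> cmod (z n) powr p * (M ^ j * v n)"
      using that by (intro mult_left_mono v_add_le) auto
    finally show ?thesis by (simp add: mult.left_commute)
  qed
  then show "\<exists>N. \<forall>n\<ge>N. norm (cmod (z n) powr p * v (n + j)) \<le> M ^ j * (cmod (z n) powr p * v n)"
    by blast
qed

lemma orbit_pnorm_nonneg: "z \<in> lp_space p v \<Longrightarrow> 0 \<le> orbit_pnorm p v z j"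
  unfolding orbit_pnorm_def
  by (intro suminf_nonneg summable_orbit_terms orbit_term_nonneg lp_space_zero)

lemma sum_le_orbit_pnorm:
  "z \<in> lp_space p v \<Longrightarrow> finite T \<Longrightarrow> (\<Sum>m\<in>T. cmod (z m) powr p * v (m + j)) \<le> orbit_pnorm p v z j"
  unfolding orbit_pnorm_def
  by (intro sum_le_suminf summable_orbit_terms ballI orbit_term_nonneg lp_space_zero)

lemma lp_norm_funpow_fwd_shift:
  assumes z: "z \<in> lp_space p v"
  shows "lp_norm p v ((fwd_shift ^^ j) z) = orbit_pnorm p v z j powr (1 / p)"
proof -
  let ?g = "\<lambda>n. cmod ((fwd_shift ^^ j) z n) powr p * v n"
  have z0: "z 0 = 0" using z by (rule lp_space_zero)
  have g: "(\<lambda>m. ?g (m + j)) = (\<lambda>m. cmod (z m) powr p * v (m + j))"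
    using z0 by (auto simp: fun_eq_iff funpow_fwd_shift_apply)
  have "summable ?g"
    using summable_orbit_terms[OF z, of j] unfolding g[symmetric] by (rule summable_iff_shift[THEN iffD1])
  have "(\<Sum>n<j. ?g n) = 0"
    using z0 by (auto simp: funpow_fwd_shift_apply intro!: sum.neutral)
  then have "(\<Sum>n. ?g n) = (\<Sum>m. ?g (m + j))"
    using suminf_minus_initial_segment[OF \<open>summable ?g\<close>, of j] by simp
  then show ?thesis
    unfolding lp_norm_def orbit_pnorm_def g by simp
qed

lemma cmod_add_powr_le: "cmod (x + y) powr p \<le> 2 powr p * (cmod x powr p + cmod y powr p)"
proof -
  have "cmod (x + y) powr p \<le> (cmod x + cmod y) powr p"
    using p_pos by (intro powr_mono2 norm_triangle_ineq) auto
  also have "\<dots> \<le> 2 powr p * (cmod x powr p + cmod y powr p)"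
    using p_pos by (intro powr_add_le_two_powr) auto
  finally show ?thesis .
qed

lemma cmod_add_powr_mult_le:
  "cmod (x m + y m) powr p * v (m + j) \<le> 2 powr p * (cmod (x m) powr p * v (m + j) + cmod (y m) powr p * v (m + j))"
  if "x 0 = 0" "y 0 = 0"
proof (cases m)
  case (Suc n)
  then have "0 < v (m + j)" using v_pos by simp
  then show ?thesis
    using mult_right_mono[OF cmod_add_powr_le[of "x m" "y m"], of "v (m + j)"] by (simp add: algebra_simps)
qed (use that in simp)

lemma lp_space_add:
  assumes "x \<in> lp_space p v" "y \<in> lp_space p v"
  shows "(\<lambda>m. x m + y m) \<in> lp_space p v"
proof -
  have "summable (\<lambda>m. cmod (x m + y m) powr p * v (m + 0))"
  proof (rule summable_comparison_test)
    show "summable (\<lambda>m. 2 powr p * (cmod (x m) powr p * v (m + 0) + cmod (y m) powr p * v (m + 0)))"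
      using assms by (intro summable_mult summable_add summable_orbit_terms)
    show "\<exists>N. \<forall>m\<ge>N. norm (cmod (x m + y m) powr p * v (m + 0))
        \<le> 2 powr p * (cmod (x m) powr p * v (m + 0) + cmod (y m) powr p * v (m + 0))"
      using cmod_add_powr_mult_le[of x y _ 0] orbit_term_nonneg[of "\<lambda>m. x m + y m" _ 0] assms
      by (auto simp: lp_space_zero simp del: add_0_right)
  qed
  then show ?thesis
    using assms by (simp add: lp_space_def)
qed

lemma lp_space_scale: "x \<in> lp_space p v \<Longrightarrow> (\<lambda>m. c * x m) \<in> lp_space p v"
  by (auto simp: lp_space_def norm_mult powr_mult mult.assoc intro: summable_mult)

lemma lp_space_diff: "x \<in> lp_space p v \<Longrightarrow> y \<in> lp_space p v \<Longrightarrow> x - y \<in> lp_space p v"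
  using lp_space_add[of x "\<lambda>m. (- 1) * y m"] lp_space_scale[of y "- 1"] by (simp add: fun_diff_def)

lemma lp_space_finite_support:
  assumes "u 0 = 0" "\<And>m. U < m \<Longrightarrow> u m = 0"
  shows "u \<in> lp_space p v"
proof -
  have "summable (\<lambda>m. cmod (u m) powr p * v m)"
    by (rule summable_finite[of "{..U}"]) (use assms(2) in auto)
  then show ?thesis
    using assms(1) by (simp add: lp_space_def)
qed

lemma orbit_pnorm_add_le:
  assumes "x \<in> lp_space p v" "y \<in> lp_space p v"
  shows "orbit_pnorm p v (\<lambda>m. x m + y m) j \<le> 2 powr p * (orbit_pnorm p v x j + orbit_pnorm p v y j)"
proof -
  have "orbit_pnorm p v (\<lambda>m. x m + y m) j
      \<le> (\<Sum>m. 2 powr p * (cmod (x m) powr p * v (m + j) + cmod (y m) powr p * v (m + j)))"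
    unfolding orbit_pnorm_def using assms
    by (intro suminf_le cmod_add_powr_mult_le summable_orbit_terms lp_space_add summable_mult summable_add lp_space_zero)
  also have "\<dots> = 2 powr p * (orbit_pnorm p v x j + orbit_pnorm p v y j)"
    unfolding orbit_pnorm_def using assms
    by (simp add: suminf_mult suminf_add summable_orbit_terms summable_add)
  finally show ?thesis .
qed

lemma orbit_pnorm_scale:
  "x \<in> lp_space p v \<Longrightarrow> orbit_pnorm p v (\<lambda>m. c * x m) j = cmod c powr p * orbit_pnorm p v x j"
  unfolding orbit_pnorm_def
  by (simp add: norm_mult powr_mult mult.assoc suminf_mult summable_orbit_terms)

lemma orbit_pnorm_sub_add_le:
  assumes "y \<in> lp_space p v" "d \<in> lp_space p v" "x \<in> lp_space p v" "0 \<le> t"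
  shows "orbit_pnorm p v (y - (\<lambda>m. d m + complex_of_real t * x m)) j
    \<le> 2 powr p * (orbit_pnorm p v (y - d) j + t powr p * orbit_pnorm p v x j)"
proof -
  have "y - (\<lambda>m. d m + complex_of_real t * x m) = (\<lambda>m. (y - d) m + (- complex_of_real t) * x m)"
    by (auto simp: fun_eq_iff)
  moreover have "orbit_pnorm p v (\<lambda>m. (- complex_of_real t) * x m) j = t powr p * orbit_pnorm p v x j"
    using orbit_pnorm_scale[OF assms(3), of "- complex_of_real t" j] assms(4) by simp
  ultimately show ?thesis
    using orbit_pnorm_add_le[OF lp_space_diff[OF assms(1,2)] lp_space_scale[OF assms(3)], of "- complex_of_real t" j]
    by simp
qed

lemma orbit_pnorm_finite_support_le:
  assumes "u 0 = 0" "\<And>m. U < m \<Longrightarrow> u m = 0" "1 \<le> j"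
  shows "orbit_pnorm p v u j \<le> (\<Sum>m\<in>{1..U}. cmod (u m) powr p * M ^ m) * v j"
proof -
  have "orbit_pnorm p v u j = (\<Sum>m\<in>{1..U}. cmod (u m) powr p * v (m + j))"
    unfolding orbit_pnorm_def using assms(1,2)
    by (intro suminf_finite) (auto simp: not_le elim: le_SucE)
  also have "\<dots> \<le> (\<Sum>m\<in>{1..U}. cmod (u m) powr p * (M ^ m * v j))"
    using v_add_le[OF assms(3)] by (intro sum_mono mult_left_mono) (auto simp: add.commute)
  also have "\<dots> = (\<Sum>m\<in>{1..U}. cmod (u m) powr p * M ^ m) * v j"
    by (simp add: sum_distrib_right mult.assoc)
  finally show ?thesis .
qed

lemma lp_norm_orbit_diff_less_iff:
  assumes "x \<in> lp_space p v" "y \<in> lp_space p v" "0 < d"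
  shows "lp_norm p v ((fwd_shift ^^ j) x - (fwd_shift ^^ j) y) < d \<longleftrightarrow> orbit_pnorm p v (x - y) j < d powr p"
proof -
  have xy: "x - y \<in> lp_space p v" using assms(1,2) by (rule lp_space_diff)
  show ?thesis
    using lp_norm_funpow_fwd_shift[OF xy, of j] powr_inverse_less_iff[OF p_pos orbit_pnorm_nonneg[OF xy] assms(3)]
    by (simp add: funpow_fwd_shift_diff)
qed

lemma embed_rat_list_lp: "embed_rat_list l \<in> lp_space p v"
  by (rule lp_space_finite_support[of _ "length l"]) (auto simp: embed_rat_list_def)

lemma lp_space_rat_approx:
  assumes y: "y \<in> lp_space p v" and "0 < e"
  shows "\<exists>l. orbit_pnorm p v (y - embed_rat_list l) 0 < e"
proof -
  define f where "f m = cmod (y m) powr p * v m" for m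
  have "summable f" using y unfolding f_def lp_space_def by simp
  then obtain U where "\<forall>n\<ge>U. norm (\<Sum>i. f (i + n)) < e / 2"
    using suminf_exist_split[of "e / 2" f] \<open>0 < e\<close> by auto
  then have U: "norm (\<Sum>i. f (i + (U + 1))) < e / 2"
    by (elim allE[of _ "U + 1"]) simp
  define r where "r m = (e / (2 * real (U + 1) * (if 1 \<le> m then v m else 1))) powr (1 / p)" for m
  have "0 < r m" for m
    using \<open>0 < e\<close> v_pos[of m] by (auto simp: r_def)
  then obtain l where l: "length l = U" "\<And>m. m \<in> {1..U} \<Longrightarrow> cmod (y m - embed_rat_list l m) < r m"
    using embed_rat_list_approx by blast
  define h where "h m = cmod ((y - embed_rat_list l) m) powr p * v m" for m
  have "y - embed_rat_list l \<in> lp_space p v" using lp_space_diff[OF y embed_rat_list_lp] .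
  then have "summable h" unfolding h_def lp_space_def by simp
  have h_small: "h m \<le> e / (2 * real (U + 1))" if "m < U + 1" for m
  proof (cases "m = 0")
    case True then show ?thesis using lp_space_zero[OF y] \<open>0 < e\<close> by (simp add: h_def embed_rat_list_def)
  next
    case False
    with that have m: "m \<in> {1..U}" "0 < v m" using v_pos by auto
    have "cmod (y m - embed_rat_list l m) powr p < r m powr p"
      using l(2)[OF m(1)] p_pos by (intro powr_less_mono2) auto
    also have "r m powr p = e / (2 * real (U + 1) * v m)"
      using m \<open>0 < e\<close> p_pos by (simp add: r_def powr_powr)
    finally have "cmod (y m - embed_rat_list l m) powr p * v m < e / (2 * real (U + 1) * v m) * v m"
      using m(2) by (rule mult_strict_right_mono)
    then show ?thesis
      using m(2) by (simp add: h_def)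
  qed
  have "orbit_pnorm p v (y - embed_rat_list l) 0 = suminf h"
    unfolding orbit_pnorm_def h_def by simp
  also have "\<dots> = (\<Sum>m. h (m + (U + 1))) + (\<Sum>m<U + 1. h m)"
    by (rule suminf_split_initial_segment[OF \<open>summable h\<close>])
  also have "(\<Sum>m. h (m + (U + 1))) = (\<Sum>m. f (m + (U + 1)))"
    unfolding h_def f_def using l(1) by (simp add: embed_rat_list_def)
  also have "(\<Sum>m<U + 1. h m) \<le> (\<Sum>m<U + 1. e / (2 * real (U + 1)))"
    using h_small by (intro sum_mono) auto
  also have "\<dots> = e / 2"
    by (simp add: field_simps)
  also have "(\<Sum>m. f (m + (U + 1))) < e / 2"
    using U by simp
  finally show ?thesis
    by (intro exI[of _ l]) (simp only: field_sum_of_halves)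
qed

end

lemma densely_distr_chaotic_imp_distr_chaotic:
  "densely_distr_chaotic Y T nrm \<Longrightarrow> distr_chaotic Y T nrm"
  unfolding distr_chaotic_def densely_distr_chaotic_def by blast

lemma weighted_shift_exists:
  assumes "1 \<le> p" "\<And>n. n \<ge> 1 \<Longrightarrow> v n > 0" "\<exists>M. \<forall>n\<ge>1. v (n + 1) / v n \<le> M"
  shows "\<exists>M. weighted_shift p v M"
proof -
  obtain M where M: "\<forall>n\<ge>1. v (n + 1) / v n \<le> M"
    using assms(3) by blast
  have "v (Suc n) \<le> max M 1 * v n" if "1 \<le> n" for n
  proof -
    have "v (Suc n) \<le> M * v n"
      using M assms(2)[OF that] that by (simp add: divide_le_eq)
    also have "\<dots> \<le> max M 1 * v n"
      using assms(2)[OF that] by (intro mult_right_mono) auto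
    finally show ?thesis .
  qed
  then have "weighted_shift p v (max M 1)"
    using assms(1,2) by unfold_locales auto
  then show ?thesis ..
qed

section \<open>Necessity of the criterion\<close>

definition distr_irregular :: "real \<Rightarrow> (nat \<Rightarrow> real) \<Rightarrow> (nat \<Rightarrow> complex) \<Rightarrow> real \<Rightarrow> bool" where
  "distr_irregular p v z e \<longleftrightarrow> (\<forall>t>0. upper_dens {j. orbit_pnorm p v z j < t} = 1)
     \<and> upper_dens {j. e \<le> orbit_pnorm p v z j} = 1"

definition vanishes_along_dense_set :: "(nat \<Rightarrow> real) \<Rightarrow> bool" where
  "vanishes_along_dense_set v \<longleftrightarrow>
     (\<exists>A. A \<subseteq> {1..} \<and> upper_dens A = 1 \<and> (\<forall>e>0. \<exists>n0. \<forall>n\<in>A. n \<ge> n0 \<longrightarrow> v n < e))"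

definition ratio_blocks :: "(nat \<Rightarrow> real) \<Rightarrow> (nat \<Rightarrow> nat set) \<Rightarrow> bool" where
  "ratio_blocks v S \<longleftrightarrow> (\<exists>\<epsilon>>0. \<exists>N :: nat \<Rightarrow> nat. \<exists>C :: nat \<Rightarrow> nat \<Rightarrow> complex.
     N 1 \<ge> 1 \<and> (\<forall>k\<ge>1. N k < N (k + 1)) \<and> (\<forall>k\<ge>1. \<forall>j\<in>S k. C k j \<noteq> 0)
     \<and> (\<forall>k\<ge>1. real (card {n \<in> {1..N k}.
          (\<Sum>j\<in>S k. cmod (C k j) * v (n + j)) / (\<Sum>j\<in>S k. cmod (C k j) * v j) \<ge> real k}) \<ge> real (N k) * \<epsilon>))"

definition dc_criterion :: "(nat \<Rightarrow> real) \<Rightarrow> bool" where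
  "dc_criterion v \<longleftrightarrow> (\<exists>S :: nat \<Rightarrow> nat set. (\<forall>k\<ge>1. finite (S k) \<and> S k \<noteq> {} \<and> S k \<subseteq> {1..})
     \<and> vanishes_along_dense_set v \<and> ratio_blocks v S)"

context weighted_shift
begin

lemma dc_set_iff_distr_irregular:
  assumes "\<Gamma> \<subseteq> lp_space p v"
  shows "dc_set fwd_shift (lp_norm p v) \<Gamma> \<epsilon> \<longleftrightarrow>
    uncountable \<Gamma> \<and> 0 < \<epsilon> \<and> (\<forall>x\<in>\<Gamma>. \<forall>y\<in>\<Gamma>. x \<noteq> y \<longrightarrow> distr_irregular p v (x - y) (\<epsilon> powr p))"
proof -
  have orbit_sets: "{j. lp_norm p v ((fwd_shift ^^ j) x - (fwd_shift ^^ j) y) < d}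
      = {j. orbit_pnorm p v (x - y) j < d powr p}" if "x \<in> \<Gamma>" "y \<in> \<Gamma>" "0 < d" for x y d
    using lp_norm_orbit_diff_less_iff[of x y d] that assms by auto
  have small_iff: "(\<forall>\<delta>>0. upper_dens {j. orbit_pnorm p v z j < \<delta> powr p} = 1)
      \<longleftrightarrow> (\<forall>t>0. upper_dens {j. orbit_pnorm p v z j < t} = 1)" for z
  proof safe
    fix t :: real assume small: "\<forall>\<delta>>0. upper_dens {j. orbit_pnorm p v z j < \<delta> powr p} = 1" and "0 < t"
    have "(t powr (1 / p)) powr p = t"
      using p_pos \<open>0 < t\<close> by (simp add: powr_powr)
    then show "upper_dens {j. orbit_pnorm p v z j < t} = 1"
      using small[rule_format, of "t powr (1 / p)"] \<open>0 < t\<close> by simp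
  qed (simp add: p_pos)
  have large_iff: "lower_dens {j. orbit_pnorm p v z j < e} = 0 \<longleftrightarrow> upper_dens {j. e \<le> orbit_pnorm p v z j} = 1" for z e
    by (simp add: lower_dens_eq_0_iff Compl_eq not_less)
  have pair: "(\<forall>\<delta>>0. lower_dens {j. lp_norm p v ((fwd_shift ^^ j) x - (fwd_shift ^^ j) y) < \<epsilon>} = 0
        \<and> upper_dens {j. lp_norm p v ((fwd_shift ^^ j) x - (fwd_shift ^^ j) y) < \<delta>} = 1)
      \<longleftrightarrow> distr_irregular p v (x - y) (\<epsilon> powr p)" (is "?dc x y \<longleftrightarrow> _")
    if "x \<in> \<Gamma>" "y \<in> \<Gamma>" "0 < \<epsilon>" for x y
  proof -
    have "?dc x y \<longleftrightarrow> (\<forall>\<delta>>0. lower_dens {j. orbit_pnorm p v (x - y) j < \<epsilon> powr p} = 0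
        \<and> upper_dens {j. orbit_pnorm p v (x - y) j < \<delta> powr p} = 1)"
      by (simp only: orbit_sets[OF that(1,2)] that(3) cong: imp_cong)
    also have "\<dots> \<longleftrightarrow> lower_dens {j. orbit_pnorm p v (x - y) j < \<epsilon> powr p} = 0
        \<and> (\<forall>\<delta>>0. upper_dens {j. orbit_pnorm p v (x - y) j < \<delta> powr p} = 1)"
      using zero_less_one by blast
    finally show ?thesis
      unfolding distr_irregular_def small_iff large_iff by blast
  qed
  show ?thesis
  proof (cases "0 < \<epsilon>")
    case True
    have "dc_set fwd_shift (lp_norm p v) \<Gamma> \<epsilon> \<longleftrightarrow> uncountable \<Gamma> \<and> (\<forall>x\<in>\<Gamma>. \<forall>y\<in>\<Gamma>. x \<noteq> y \<longrightarrow> ?dc x y)"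
      unfolding dc_set_def using True by blast
    also have "\<dots> \<longleftrightarrow> uncountable \<Gamma> \<and> (\<forall>x\<in>\<Gamma>. \<forall>y\<in>\<Gamma>. x \<noteq> y \<longrightarrow> distr_irregular p v (x - y) (\<epsilon> powr p))"
      by (simp only: pair[OF _ _ True] cong: ball_cong)
    finally show ?thesis
      using True by simp
  qed (simp add: dc_set_def)
qed

lemma distr_irregular_imp_vanishing:
  assumes z: "z \<in> lp_space p v" and "z m0 \<noteq> 0"
    and small: "\<And>t. 0 < t \<Longrightarrow> upper_dens {j. orbit_pnorm p v z j < t} = 1"
  shows "vanishes_along_dense_set v"
proof -
  have "1 \<le> m0" using assms(2) lp_space_zero[OF z] by (cases m0) auto
  define c where "c = cmod (z m0) powr p"
  have "0 < c" using assms(2) by (simp add: c_def)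
  have c_le: "c * v (m0 + j) \<le> orbit_pnorm p v z j" for j
    using sum_le_orbit_pnorm[OF z, of "{m0}" j] by (simp add: c_def)
  define X where "X i = {n. 1 \<le> n \<and> v n < 1 / real (Suc i)}" for i
  have "upper_dens (X i) = 1" for i
  proof -
    have "(+) m0 ` {j. orbit_pnorm p v z j < c / real (Suc i)} \<subseteq> X i"
    proof safe
      fix j assume "orbit_pnorm p v z j < c / real (Suc i)"
      then have "c * v (m0 + j) < c * (1 / real (Suc i))"
        using c_le[of j] by simp
      then have "v (m0 + j) < 1 / real (Suc i)"
        using \<open>0 < c\<close> by (simp only: mult_less_cancel_left_pos)
      then show "m0 + j \<in> X i"
        using \<open>1 \<le> m0\<close> unfolding X_def by simp
    qed
    moreover have "upper_dens ((+) m0 ` {j. orbit_pnorm p v z j < c / real (Suc i)}) = 1"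
      using \<open>0 < c\<close> by (intro upper_dens_eq_1_shift small) simp
    ultimately show ?thesis
      using upper_dens_eq_1_mono by blast
  qed
  moreover have "X (Suc i) \<subseteq> X i" for i
    unfolding X_def by (auto intro: order.strict_trans2 simp: frac_le)
  ultimately obtain A where A: "upper_dens A = 1" "A \<subseteq> X 0" "\<And>i. \<exists>n0. \<forall>n\<in>A. n0 \<le> n \<longrightarrow> n \<in> X i"
    using upper_dens_eq_1_diagonal[of X] by blast
  have "\<exists>n0. \<forall>n\<in>A. n0 \<le> n \<longrightarrow> v n < e" if "0 < e" for e
  proof -
    from reals_Archimedean[OF \<open>0 < e\<close>] obtain i where "inverse (real (Suc i)) < e" ..
    moreover obtain n0 where "\<forall>n\<in>A. n0 \<le> n \<longrightarrow> n \<in> X i" using A(3) by blast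
    ultimately show ?thesis
      unfolding X_def by (force simp: inverse_eq_divide)
  qed
  moreover have "A \<subseteq> {1..}" using A(2) by (auto simp: X_def)
  ultimately show ?thesis
    unfolding vanishes_along_dense_set_def using A(1) by blast
qed

lemma partial_sums_exceed:
  assumes "z \<in> lp_space p v" "finite J" "\<And>j. j \<in> J \<Longrightarrow> c < orbit_pnorm p v z j"
  obtains L where "\<And>j. j \<in> J \<Longrightarrow> c < (\<Sum>i<L. cmod (z i) powr p * v (i + j))"
proof -
  have "\<forall>j\<in>J. eventually (\<lambda>L. c < (\<Sum>i<L. cmod (z i) powr p * v (i + j))) sequentially"
    using order_tendstoD(1)[OF summable_LIMSEQ[OF summable_orbit_terms[OF assms(1)]]] assms(3)
    unfolding orbit_pnorm_def by blast
  then have "eventually (\<lambda>L. \<forall>j\<in>J. c < (\<Sum>i<L. cmod (z i) powr p * v (i + j))) sequentially"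
    using assms(2) by (simp add: eventually_ball_finite)
  then show thesis
    using that by (auto simp: eventually_sequentially)
qed

lemma truncated_ratio_block:
  assumes z: "z \<in> lp_space p v" and "0 < e" "1 \<le> k"
    and m: "orbit_pnorm p v z m < e / (2 * real k)"
    and "G \<noteq> {}" and L: "\<And>n. n \<in> G \<Longrightarrow> e / 2 < (\<Sum>i<L. cmod (z i) powr p * v (i + (n + m)))"
  obtains S C where "finite S" "S \<noteq> {}" "S \<subseteq> {1..}" "\<forall>j\<in>S. C j \<noteq> (0::complex)"
    "\<And>n. n \<in> G \<Longrightarrow> real k \<le> (\<Sum>j\<in>S. cmod (C j) * v (n + j)) / (\<Sum>j\<in>S. cmod (C j) * v j)"
proof -
  define T where "T = {i \<in> {..<L}. z i \<noteq> 0}"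
  define S where "S = (+) m ` T"
  define C where "C j = complex_of_real (cmod (z (j - m)) powr p)" for j
  have sum_S: "(\<Sum>j\<in>S. cmod (C j) * v (n + j)) = (\<Sum>i<L. cmod (z i) powr p * v (i + (n + m)))" for n
  proof -
    have "(\<Sum>j\<in>S. cmod (C j) * v (n + j)) = (\<Sum>i\<in>T. cmod (z i) powr p * v (i + (n + m)))"
      unfolding S_def by (subst sum.reindex) (auto simp: inj_on_def C_def algebra_simps)
    also have "\<dots> = (\<Sum>i<L. cmod (z i) powr p * v (i + (n + m)))"
      unfolding T_def by (rule sum.mono_neutral_left) auto
    finally show ?thesis .
  qed
  have "finite S" by (simp add: S_def T_def)
  have S_pos: "S \<subseteq> {1..}"
    using lp_space_zero[OF z] by (auto simp: S_def T_def Suc_le_eq gr0I)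
  have C_nz: "\<forall>j\<in>S. C j \<noteq> 0"
    by (auto simp: S_def T_def C_def)
  obtain n1 where "n1 \<in> G" using \<open>G \<noteq> {}\<close> by blast
  have "S \<noteq> {}"
  proof
    assume "S = {}"
    then show False
      using sum_S[of n1] L[OF \<open>n1 \<in> G\<close>] \<open>0 < e\<close> by simp
  qed
  have den_pos: "0 < (\<Sum>j\<in>S. cmod (C j) * v j)"
    using \<open>finite S\<close> \<open>S \<noteq> {}\<close> S_pos C_nz v_pos by (intro sum_pos) auto
  have "(\<Sum>j\<in>S. cmod (C j) * v j) \<le> orbit_pnorm p v z m"
    using sum_S[of 0] sum_le_orbit_pnorm[OF z, of "{..<L}" m] by simp
  with m have "real k * (\<Sum>j\<in>S. cmod (C j) * v j) < real k * (e / (2 * real k))"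
    using \<open>1 \<le> k\<close> by (intro mult_strict_left_mono) auto
  then have den_small: "real k * (\<Sum>j\<in>S. cmod (C j) * v j) < e / 2"
    using \<open>1 \<le> k\<close> by simp
  have "real k \<le> (\<Sum>j\<in>S. cmod (C j) * v (n + j)) / (\<Sum>j\<in>S. cmod (C j) * v j)" if "n \<in> G" for n
    using L[OF that] sum_S[of n] den_small den_pos by (simp add: le_divide_eq)
  with \<open>finite S\<close> \<open>S \<noteq> {}\<close> S_pos C_nz show thesis
    by (rule that)
qed

text \<open>The orbit of \<open>z\<close> is tiny at some time \<open>m\<close> and large at most times \<open>n + m\<close>; the
  coefficients \<open>cmod (z i) powr p\<close> of a truncation of \<open>z\<close>, shifted by \<open>m\<close>, then have ratio \<open>\<ge> k\<close>
  at most times \<open>n\<close>.\<close>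

lemma distr_irregular_imp_ratio_block:
  assumes z: "z \<in> lp_space p v" and irr: "distr_irregular p v z e" and "0 < e" "1 \<le> k"
  shows "\<exists>N\<ge>N0. \<exists>S C. finite S \<and> S \<noteq> {} \<and> S \<subseteq> {1..} \<and> (\<forall>j\<in>S. C j \<noteq> (0::complex)) \<and>
    real N * (1 / 2) \<le> real (card {n \<in> {1..N}.
      real k \<le> (\<Sum>j\<in>S. cmod (C j) * v (n + j)) / (\<Sum>j\<in>S. cmod (C j) * v j)})"
proof -
  have "0 < e / (2 * real k)"
    using \<open>0 < e\<close> \<open>1 \<le> k\<close> by simp
  then have "{j. orbit_pnorm p v z j < e / (2 * real k)} \<noteq> {}"
    using irr upper_dens_eq_1_nonempty unfolding distr_irregular_def by blast
  then obtain m where m: "orbit_pnorm p v z m < e / (2 * real k)"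
    by blast
  let ?large = "{j. e \<le> orbit_pnorm p v z j}"
  have "upper_dens {n. n + m \<in> ?large} = 1"
    using irr by (intro upper_dens_eq_1_shift_left) (simp add: distr_irregular_def)
  then obtain N where N: "N0 + 1 \<le> N" "(1 - 1 / 2) * real N \<le> real (card ({n. n + m \<in> ?large} \<inter> {1..N}))"
    unfolding upper_dens_eq_1_iff by (elim allE[of _ "1 / 2"] allE[of _ "N0 + 1"]) auto
  define G where "G = {n. n + m \<in> ?large} \<inter> {1..N}"
  have "G \<noteq> {}"
    using N unfolding G_def by (intro notI) simp
  have "finite ((\<lambda>n. n + m) ` G)"
    by (simp add: G_def)
  moreover have "e / 2 < orbit_pnorm p v z j" if "j \<in> (\<lambda>n. n + m) ` G" for j
    using that \<open>0 < e\<close> by (auto simp: G_def)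
  ultimately obtain L where "\<And>j. j \<in> (\<lambda>n. n + m) ` G \<Longrightarrow> e / 2 < (\<Sum>i<L. cmod (z i) powr p * v (i + j))"
    using partial_sums_exceed[OF z, of "(\<lambda>n. n + m) ` G" "e / 2"] by blast
  then obtain S C where SC: "finite S" "S \<noteq> {}" "S \<subseteq> {1..}" "\<forall>j\<in>S. C j \<noteq> (0::complex)"
      "\<And>n. n \<in> G \<Longrightarrow> real k \<le> (\<Sum>j\<in>S. cmod (C j) * v (n + j)) / (\<Sum>j\<in>S. cmod (C j) * v j)"
    by (rule truncated_ratio_block[OF z \<open>0 < e\<close> \<open>1 \<le> k\<close> m \<open>G \<noteq> {}\<close>]) (auto intro: that)
  have "G \<subseteq> {n \<in> {1..N}. real k \<le> (\<Sum>j\<in>S. cmod (C j) * v (n + j)) / (\<Sum>j\<in>S. cmod (C j) * v j)}"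
    using SC(5) unfolding G_def by blast
  then have "card G \<le> card {n \<in> {1..N}. real k \<le> (\<Sum>j\<in>S. cmod (C j) * v (n + j)) / (\<Sum>j\<in>S. cmod (C j) * v j)}"
    by (intro card_mono) auto
  then show ?thesis
    using N SC(1-4) unfolding G_def by (intro exI[of _ N] conjI exI[of _ S] exI[of _ C]) auto
qed

lemma distr_irregular_imp_ratio_blocks:
  assumes z: "z \<in> lp_space p v" "distr_irregular p v z e" and "0 < e"
  shows "\<exists>S. (\<forall>k\<ge>1. finite (S k) \<and> S k \<noteq> {} \<and> S k \<subseteq> {1..}) \<and> ratio_blocks v S"
proof -
  let ?Q = "\<lambda>k N S C. finite S \<and> S \<noteq> {} \<and> S \<subseteq> {1..} \<and> (\<forall>j\<in>S. C j \<noteq> (0::complex)) \<and>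
    real N * (1 / 2) \<le> real (card {n \<in> {1..N}. real k \<le> (\<Sum>j\<in>S. cmod (C j) * v (n + j)) / (\<Sum>j\<in>S. cmod (C j) * v j)})"
  have "\<exists>N\<ge>N0. \<exists>S C. 1 \<le> k \<longrightarrow> ?Q k N S C" for k N0
  proof (cases "1 \<le> k")
    case True
    then show ?thesis
      using distr_irregular_imp_ratio_block[OF z \<open>0 < e\<close> True, of N0] by auto
  qed auto
  then obtain N where N: "strict_mono N" "\<And>k. \<exists>S C. 1 \<le> k \<longrightarrow> ?Q k (N k) S C"
    by (rule obtain_strict_mono_witnesses[of "\<lambda>k N. \<exists>S C. 1 \<le> k \<longrightarrow> ?Q k N S C"]) (rule that)
  then have "\<forall>k. \<exists>S C. 1 \<le> k \<longrightarrow> ?Q k (N k) S C"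
    by (intro allI N(2))
  from choice[OF this] obtain S where "\<forall>k. \<exists>C. 1 \<le> k \<longrightarrow> ?Q k (N k) (S k) C" ..
  from choice[OF this] obtain C where SC: "\<forall>k. 1 \<le> k \<longrightarrow> ?Q k (N k) (S k) (C k)" ..
  have "N 0 < N 1"
    using N(1) by (simp add: strict_mono_less)
  then have N_1: "1 \<le> N 1" by simp
  have N_Suc: "N k < N (k + 1)" for k
    using N(1) by (simp add: strict_mono_less)
  show ?thesis
    unfolding ratio_blocks_def using SC N_1 N_Suc
    by (intro exI[of _ S] conjI exI[of _ "1 / 2"] exI[of _ N] exI[of _ C]) auto
qed

lemma distr_chaotic_imp_dc_criterion:
  assumes "distr_chaotic (lp_space p v) fwd_shift (lp_norm p v)"
  shows "dc_criterion v"
proof -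
  obtain \<Gamma> \<epsilon> where \<Gamma>: "\<Gamma> \<subseteq> lp_space p v" "dc_set fwd_shift (lp_norm p v) \<Gamma> \<epsilon>"
    using assms unfolding distr_chaotic_def by blast
  then have "uncountable \<Gamma>" "0 < \<epsilon>" and irr: "\<And>x y. x \<in> \<Gamma> \<Longrightarrow> y \<in> \<Gamma> \<Longrightarrow> x \<noteq> y \<Longrightarrow> distr_irregular p v (x - y) (\<epsilon> powr p)"
    using dc_set_iff_distr_irregular by blast+
  then obtain x where "x \<in> \<Gamma>"
    by (metis countable_empty ex_in_conv)
  moreover obtain y where "y \<in> \<Gamma>" "x \<noteq> y"
    using \<open>uncountable \<Gamma>\<close> countable_subset[of \<Gamma> "{x}"] by auto
  ultimately have "x - y \<in> lp_space p v" "distr_irregular p v (x - y) (\<epsilon> powr p)"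
    using \<Gamma>(1) irr[of x y] lp_space_diff[of x y] by blast+
  note z = this
  from \<open>x \<noteq> y\<close> obtain m0 where "(x - y) m0 \<noteq> 0"
    by (auto simp: fun_eq_iff)
  with z have "vanishes_along_dense_set v"
    by (intro distr_irregular_imp_vanishing) (auto simp: distr_irregular_def)
  moreover obtain S where "\<forall>k\<ge>1. finite (S k) \<and> S k \<noteq> {} \<and> S k \<subseteq> {1..}" "ratio_blocks v S"
    using distr_irregular_imp_ratio_blocks[OF z] \<open>0 < \<epsilon>\<close> by auto
  ultimately show ?thesis
    unfolding dc_criterion_def by blast
qed

end

section \<open>An irregular vector\<close>

locale dc_construction = weighted_shift +
  fixes S :: "nat \<Rightarrow> nat set" and A :: "nat set" and \<epsilon> :: real
    and N :: "nat \<Rightarrow> nat" and C :: "nat \<Rightarrow> nat \<Rightarrow> complex"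
  assumes S: "\<And>k. 1 \<le> k \<Longrightarrow> finite (S k) \<and> S k \<noteq> {} \<and> S k \<subseteq> {1..}"
    and A_dens: "upper_dens A = 1"
    and v_vanishing_on_A: "\<And>e. 0 < e \<Longrightarrow> \<exists>n0. \<forall>n\<in>A. n0 \<le> n \<longrightarrow> v n < e"
    and eps_pos: "0 < \<epsilon>"
    and N_1: "1 \<le> N 1" and N_Suc: "\<And>k. 1 \<le> k \<Longrightarrow> N k < N (k + 1)"
    and C_nonzero: "\<And>k j. 1 \<le> k \<Longrightarrow> j \<in> S k \<Longrightarrow> C k j \<noteq> 0"
    and ratio_large: "\<And>k. 1 \<le> k \<Longrightarrow> real (N k) * \<epsilon> \<le> real (card {n \<in> {1..N k}.
          real k \<le> (\<Sum>j\<in>S k. cmod (C k j) * v (n + j)) / (\<Sum>j\<in>S k. cmod (C k j) * v j)})"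
begin

definition coeff_sum :: "nat \<Rightarrow> nat \<Rightarrow> real" where
  "coeff_sum k t = (\<Sum>j\<in>S k. cmod (C k j) * v (t + j))"

lemma coeff_sum_pos: "1 \<le> k \<Longrightarrow> 0 < coeff_sum k t"
  unfolding coeff_sum_def
proof (rule sum_pos)
  fix j assume "1 \<le> k" "j \<in> S k"
  moreover from this have "1 \<le> t + j" using S by fastforce
  ultimately show "0 < cmod (C k j) * v (t + j)"
    using C_nonzero v_pos[of "t + j"] by simp
qed (use S in auto)

lemma coeff_sum_Suc_le: "1 \<le> k \<Longrightarrow> coeff_sum k (Suc t) \<le> M * coeff_sum k t"
  unfolding coeff_sum_def sum_distrib_left
proof (rule sum_mono)
  fix j assume "1 \<le> k" "j \<in> S k"
  then have "1 \<le> t + j" using S by fastforce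
  then have "v (Suc (t + j)) \<le> M * v (t + j)"
    by (rule v_Suc_le)
  then have "cmod (C k j) * v (Suc (t + j)) \<le> cmod (C k j) * (M * v (t + j))"
    by (rule mult_left_mono) simp
  then show "cmod (C k j) * v (Suc t + j) \<le> M * (cmod (C k j) * v (t + j))"
    by (simp add: mult.left_commute)
qed

lemma coeff_sum_add_le: "1 \<le> k \<Longrightarrow> coeff_sum k (t + d) \<le> M ^ d * coeff_sum k t"
  using funpow_growth_bound[of 0 "coeff_sum k" M t d] coeff_sum_Suc_le M_ge_1 by simp

lemma N_ge: "1 \<le> k \<Longrightarrow> k \<le> N k"
proof (induction k rule: dec_induct)
  case (step k)
  then show ?case using N_Suc[of k] by simp
qed (use N_1 in simp)

lemma coeff_sum_large_after:
  assumes "1 \<le> k" "B + 1 \<le> k" "0 \<le> Q" "M ^ B * Q \<le> real k" "2 * real B / \<epsilon> \<le> real k"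
  shows "real (N k) * \<epsilon> / 2 \<le> real (card {n \<in> {1..N k - B}. coeff_sum k B * Q \<le> coeff_sum k (B + n)})"
proof -
  let ?E = "{n \<in> {1..N k - B}. coeff_sum k B * Q \<le> coeff_sum k (B + n)}"
  define E where "E = {n \<in> {1..N k}. real k \<le> coeff_sum k n / coeff_sum k 0}"
  have card_E: "real (N k) * \<epsilon> \<le> real (card E)"
    using ratio_large[OF assms(1)] unfolding E_def coeff_sum_def by simp
  have "n - B \<in> ?E" if n: "n \<in> E" "n \<in> {B<..N k}" for n
  proof -
    have "coeff_sum k B * Q \<le> M ^ B * coeff_sum k 0 * Q"
      using coeff_sum_add_le[OF assms(1), of 0 B] assms(3) by (simp add: mult_right_mono)
    also have "\<dots> \<le> real k * coeff_sum k 0"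
      using assms(4) coeff_sum_pos[OF assms(1), of 0] by (simp add: mult.commute mult.left_commute mult_right_mono)
    also have "\<dots> \<le> coeff_sum k n"
      using n(1) coeff_sum_pos[OF assms(1), of 0] unfolding E_def by (simp add: le_divide_eq)
    finally show "n - B \<in> ?E"
      using n(2) by auto
  qed
  then have "(\<lambda>n. n - B) ` (E \<inter> {B<..N k}) \<subseteq> ?E"
    by blast
  then have "card (E \<inter> {B<..N k}) \<le> card ?E"
    by (intro card_inj_on_le[of "\<lambda>n. n - B"]) (auto simp: inj_on_def)
  moreover have "card (E \<inter> {1..N k}) \<le> card (E \<inter> {B<..N k}) + B"
    by (rule card_Int_le_card_greaterThanAtMost)
  moreover have "E \<inter> {1..N k} = E" by (auto simp: E_def)
  ultimately have "real (card E) \<le> real (card ?E) + real B"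
    by (simp flip: of_nat_add)
  moreover have "2 * real B / \<epsilon> \<le> real (N k)"
    using assms(5) N_ge[OF assms(1)] by linarith
  then have "real B \<le> real (N k) * \<epsilon> / 2"
    using eps_pos by (simp add: field_simps)
  ultimately show ?thesis
    using card_E by linarith
qed

text \<open>Hypothesis (ii) gives, for large \<open>k\<close>, growth of \<open>coeff_sum k\<close> from time \<open>0\<close> on an
  \<open>\<epsilon>\<close>-fraction of times; \<open>growth_window_exists\<close> turns this into a long window of relative growth.\<close>

lemma growth_block_exists:
  assumes "0 < K'" "0 < \<eta>" "\<eta> < 1"
  shows "\<exists>k s L. 1 \<le> k \<and> B \<le> s \<and> R \<le> L \<and>
    (1 - \<eta>) * real L \<le> real (card {n \<in> {1..L}. K' * coeff_sum k s \<le> coeff_sum k (s + n)})"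
proof -
  define K where "K = max K' (max (M ^ R) 2)"
  have "1 < K" "M ^ R \<le> K" "K' \<le> K" unfolding K_def by auto
  obtain I where I: "(1 - \<eta>) ^ I < \<epsilon> / 2"
    using real_arch_pow_inv[of "\<epsilon> / 2" "1 - \<eta>"] eps_pos assms by auto
  define k where "k = max (B + 1) (nat \<lceil>max (M ^ B * K ^ (I + 1)) (2 * real B / \<epsilon>)\<rceil>)"
  have "1 \<le> k" "B + 1 \<le> k" unfolding k_def by auto
  have k_large: "M ^ B * K ^ (I + 1) \<le> real k" "2 * real B / \<epsilon> \<le> real k"
    unfolding k_def by linarith+
  define N' where "N' = N k - B"
  have "0 < N'" using N_ge[OF \<open>1 \<le> k\<close>] \<open>B + 1 \<le> k\<close> unfolding N'_def by simp
  have "(1 - \<eta>) ^ I * real N' < \<epsilon> / 2 * real N'"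
    using I \<open>0 < N'\<close> by (intro mult_strict_right_mono) auto
  also have "\<dots> \<le> real (N k) * \<epsilon> / 2"
    using eps_pos by (simp add: N'_def)
  also have "\<dots> \<le> real (card {n \<in> {1..N'}. coeff_sum k B * K ^ (I + 1) \<le> coeff_sum k (B + n)})"
    unfolding N'_def using \<open>1 < K\<close> by (intro coeff_sum_large_after \<open>1 \<le> k\<close> \<open>B + 1 \<le> k\<close> k_large) simp
  finally obtain s L where sL: "B \<le> s" "R \<le> L"
      "(1 - \<eta>) * real L \<le> real (card {n \<in> {1..L}. K * coeff_sum k s \<le> coeff_sum k (s + n)})"
    using growth_window_exists[of "coeff_sum k" M K R \<eta> I N' B] coeff_sum_pos coeff_sum_Suc_le \<open>1 \<le> k\<close> M_ge_1
      \<open>1 < K\<close> \<open>M ^ R \<le> K\<close> assms(2,3) by blast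
  have "{n \<in> {1..L}. K * coeff_sum k s \<le> coeff_sum k (s + n)} \<subseteq> {n \<in> {1..L}. K' * coeff_sum k s \<le> coeff_sum k (s + n)}"
    using \<open>K' \<le> K\<close> coeff_sum_pos[OF \<open>1 \<le> k\<close>, of s] by (auto intro: order.trans[OF mult_right_mono])
  then have "card {n \<in> {1..L}. K * coeff_sum k s \<le> coeff_sum k (s + n)} \<le> card {n \<in> {1..L}. K' * coeff_sum k s \<le> coeff_sum k (s + n)}"
    by (intro card_mono) auto
  then show ?thesis
    using sL \<open>1 \<le> k\<close> by (intro exI[of _ k] exI[of _ s] exI[of _ L]) auto
qed

definition block_scale :: "nat \<Rightarrow> nat \<Rightarrow> real" where
  "block_scale i P = 1 / (2 ^ (i + 1) * M ^ P)"

lemma block_scale_pos: "0 < block_scale i P"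
  unfolding block_scale_def using M_ge_1 by simp

definition good_block :: "nat \<Rightarrow> nat \<Rightarrow> nat \<Rightarrow> nat \<times> nat \<times> nat \<Rightarrow> bool" where
  "good_block i P B b \<longleftrightarrow> (case b of (k, s, L) \<Rightarrow> 1 \<le> k \<and> B \<le> s \<and> i + 1 \<le> L \<and>
     (1 - 1 / real (i + 2)) * real L
       \<le> real (card {n \<in> {1..L}. real (i + 1) / block_scale i P * coeff_sum k s \<le> coeff_sum k (s + n)}))"

definition choose_block :: "nat \<Rightarrow> nat \<Rightarrow> nat \<Rightarrow> nat \<times> nat \<times> nat" where
  "choose_block i P B = (SOME b. good_block i P B b)"

lemma good_choose_block: "good_block i P B (choose_block i P B)"
proof -
  have "0 < real (i + 1) / block_scale i P" "0 < 1 / real (i + 2)" "1 / real (i + 2) < 1"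
    using block_scale_pos by auto
  from growth_block_exists[OF this, of B "i + 1"] have "\<exists>b. good_block i P B b"
    unfolding good_block_def by auto
  then show ?thesis
    unfolding choose_block_def by (rule someI_ex)
qed

definition block_vec :: "nat \<Rightarrow> nat \<Rightarrow> real \<Rightarrow> nat \<Rightarrow> real" where
  "block_vec k s a m = (if s < m \<and> m - s \<in> S k then a * cmod (C k (m - s)) / coeff_sum k s else 0)"

definition profile_mass :: "(nat \<Rightarrow> real) \<Rightarrow> nat \<Rightarrow> nat \<Rightarrow> real" where
  "profile_mass f B j = (\<Sum>m\<in>{1..B}. f m * v (m + j))"

definition good_horizon :: "nat \<Rightarrow> nat \<Rightarrow> (nat \<Rightarrow> real) \<Rightarrow> nat \<Rightarrow> nat \<Rightarrow> bool" where
  "good_horizon i P f B P' \<longleftrightarrow> P + 1 \<le> P' \<and> i + 1 \<le> P' \<and>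
     (1 - 1 / real (i + 1)) * real P' \<le> real (card {j \<in> {1..P'}. j \<in> A \<and> profile_mass f B j < 1 / real (i + 1)})"

definition next_horizon :: "nat \<Rightarrow> nat \<Rightarrow> (nat \<Rightarrow> real) \<Rightarrow> nat \<Rightarrow> nat" where
  "next_horizon i P f B = (SOME P'. good_horizon i P f B P')"

lemma good_next_horizon:
  assumes f_nonneg: "\<And>m. 0 \<le> f m"
  shows "good_horizon i P f B (next_horizon i P f B)"
proof -
  define c where "c = (\<Sum>m\<in>{1..B}. f m * M ^ m)"
  have "0 \<le> c" unfolding c_def using f_nonneg M_ge_1 by (intro sum_nonneg) auto
  define e where "e = 1 / (real (i + 1) * (c + 1))"
  have "0 < e" using \<open>0 \<le> c\<close> unfolding e_def by auto
  obtain n0 where n0: "\<And>n. n \<in> A \<Longrightarrow> n0 \<le> n \<Longrightarrow> v n < e" using v_vanishing_on_A[OF \<open>0 < e\<close>] by blast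
  have "A \<inter> {n0<..} \<subseteq> {j. j \<in> A \<and> profile_mass f B j < 1 / real (i + 1)}"
  proof safe
    fix j assume j: "j \<in> A" "n0 < j"
    have "profile_mass f B j \<le> (\<Sum>m\<in>{1..B}. f m * (M ^ m * v j))"
      unfolding profile_mass_def
    proof (rule sum_mono)
      fix m assume "m \<in> {1..B}"
      have "v (j + m) \<le> M ^ m * v j" using v_add_le j by simp
      then show "f m * v (m + j) \<le> f m * (M ^ m * v j)"
        using f_nonneg[of m] by (intro mult_left_mono) (auto simp: add.commute)
    qed
    also have "\<dots> = c * v j" unfolding c_def by (simp add: sum_distrib_right mult.assoc)
    also have "\<dots> \<le> c * e" using n0[of j] j \<open>0 \<le> c\<close> by (intro mult_left_mono) auto
    also have "c * e = c / (c + 1) * (1 / real (i + 1))" unfolding e_def by (simp add: field_simps)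
    also have "\<dots> < 1 * (1 / real (i + 1))"
      using \<open>0 \<le> c\<close> by (intro mult_strict_right_mono) auto
    finally show "profile_mass f B j < 1 / real (i + 1)" by simp
  qed
  then have "upper_dens {j. j \<in> A \<and> profile_mass f B j < 1 / real (i + 1)} = 1"
    using upper_dens_eq_1_tail[OF A_dens] upper_dens_eq_1_mono by blast
  then obtain P' where P': "max (P + 1) (i + 1) \<le> P'"
    "(1 - 1 / real (i + 1)) * real P' \<le> real (card ({j. j \<in> A \<and> profile_mass f B j < 1 / real (i + 1)} \<inter> {1..P'}))"
    unfolding upper_dens_eq_1_iff by (elim allE[of _ "1 / real (i + 1)"] allE[of _ "max (P + 1) (i + 1)"]) auto
  have "{j. j \<in> A \<and> profile_mass f B j < 1 / real (i + 1)} \<inter> {1..P'}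
      = {j \<in> {1..P'}. j \<in> A \<and> profile_mass f B j < 1 / real (i + 1)}" by auto
  moreover have "P + 1 \<le> P'" "i + 1 \<le> P'" using P'(1) by auto
  ultimately have "good_horizon i P f B P'"
    using P'(2) unfolding good_horizon_def by simp
  then show ?thesis unfolding next_horizon_def by (rule someI)
qed

text \<open>A stage is a triple \<open>(P, B, f)\<close>: the orbit is already controlled at the times \<open>j \<le> P\<close>, and
  the profile \<open>f\<close>, the prospective values \<open>cmod (x m) powr p\<close>, is supported in \<open>{1..B}\<close>. Stage \<open>i\<close>
  adds a block placed after \<open>B\<close> and then moves the horizon to a \<open>P'\<close> up to which the new profile
  has small orbit on most of \<open>A\<close>.\<close>

definition stage_step :: "nat \<Rightarrow> nat \<times> nat \<times> (nat \<Rightarrow> real) \<Rightarrow> nat \<times> nat \<times> (nat \<Rightarrow> real)" where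
  "stage_step i state = (let P = fst state; B = fst (snd state); f = snd (snd state); b = choose_block i P B;
      k = fst b; s = fst (snd b); f' = (\<lambda>m. f m + block_vec k s (block_scale i P) m); B' = s + Max (S k)
     in (next_horizon i P f' B', B', f'))"

definition stage :: "nat \<Rightarrow> nat \<times> nat \<times> (nat \<Rightarrow> real)" where
  "stage = rec_nat (0, 0, \<lambda>m. 0) stage_step"

definition horizon :: "nat \<Rightarrow> nat" where "horizon i = fst (stage i)"

definition bound :: "nat \<Rightarrow> nat" where "bound i = fst (snd (stage i))"

definition profile :: "nat \<Rightarrow> nat \<Rightarrow> real" where "profile i = snd (snd (stage i))"

definition blk_k :: "nat \<Rightarrow> nat" where "blk_k i = fst (choose_block i (horizon i) (bound i))"

definition blk_s :: "nat \<Rightarrow> nat" where "blk_s i = fst (snd (choose_block i (horizon i) (bound i)))"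

definition blk_len :: "nat \<Rightarrow> nat" where "blk_len i = snd (snd (choose_block i (horizon i) (bound i)))"

definition blk_scale :: "nat \<Rightarrow> real" where "blk_scale i = block_scale i (horizon i)"

definition blk :: "nat \<Rightarrow> nat \<Rightarrow> real" where "blk i = block_vec (blk_k i) (blk_s i) (blk_scale i)"

lemma stage_0: "horizon 0 = 0" "bound 0 = 0" "profile 0 = (\<lambda>m. 0)"
  by (simp_all add: horizon_def bound_def profile_def stage_def)

lemma stage_Suc:
  "profile (Suc i) = (\<lambda>m. profile i m + blk i m)"
  "bound (Suc i) = blk_s i + Max (S (blk_k i))"
  "horizon (Suc i) = next_horizon i (horizon i) (profile (Suc i)) (bound (Suc i))"
  by (simp_all add: horizon_def bound_def profile_def stage_def stage_step_def Let_def
      blk_k_def blk_s_def blk_def blk_scale_def)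

lemma blk_props:
  "1 \<le> blk_k i" "bound i \<le> blk_s i" "i + 1 \<le> blk_len i"
  "(1 - 1 / real (i + 2)) * real (blk_len i) \<le> real (card {n \<in> {1..blk_len i}.
      real (i + 1) / blk_scale i * coeff_sum (blk_k i) (blk_s i) \<le> coeff_sum (blk_k i) (blk_s i + n)})"
  using good_choose_block[of i "horizon i" "bound i"]
  unfolding good_block_def blk_k_def blk_s_def blk_len_def blk_scale_def by (auto simp: case_prod_beta)

lemma blk_scale_pos: "0 < blk_scale i"
  unfolding blk_scale_def by (rule block_scale_pos)

lemma blk_nonneg: "0 \<le> blk i m"
  unfolding blk_def block_vec_def
  using blk_scale_pos[of i] coeff_sum_pos[OF blk_props(1)[of i], of "blk_s i"] by simp

lemma S_blk_k: "finite (S (blk_k i))" "S (blk_k i) \<noteq> {}" "S (blk_k i) \<subseteq> {1..}"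
  using S[OF blk_props(1)] by auto

lemma Max_S_blk_k: "j \<in> S (blk_k i) \<Longrightarrow> j \<le> Max (S (blk_k i))" "1 \<le> Max (S (blk_k i))"
proof -
  show "j \<in> S (blk_k i) \<Longrightarrow> j \<le> Max (S (blk_k i))"
    using S_blk_k(1) by (rule Max_ge)
  obtain j0 where "j0 \<in> S (blk_k i)" using S_blk_k(2) by blast
  then show "1 \<le> Max (S (blk_k i))"
    using S_blk_k(1,3) Max_ge[OF S_blk_k(1)] by (meson atLeast_iff order_trans subsetD)
qed

definition blk_support :: "nat \<Rightarrow> nat set" where
  "blk_support i = (+) (blk_s i) ` S (blk_k i)"

definition blk_mass :: "nat \<Rightarrow> nat \<Rightarrow> real" where
  "blk_mass i n = blk_scale i * coeff_sum (blk_k i) (blk_s i + n) / coeff_sum (blk_k i) (blk_s i)"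

lemma finite_blk_support: "finite (blk_support i)"
  unfolding blk_support_def using S_blk_k by simp

lemma blk_in_support: "blk i m \<noteq> 0 \<Longrightarrow> m \<in> blk_support i"
  unfolding blk_def block_vec_def blk_support_def
  by (auto split: if_splits intro!: image_eqI[of _ _ "m - blk_s i"])

lemma blk_support_range: "m \<in> blk_support i \<Longrightarrow> blk_s i < m \<and> m \<le> bound (Suc i)"
proof -
  assume "m \<in> blk_support i"
  then obtain j where j: "j \<in> S (blk_k i)" "m = blk_s i + j" unfolding blk_support_def by auto
  then have "1 \<le> j" "j \<le> Max (S (blk_k i))" using S_blk_k(3) Max_S_blk_k(1) by auto
  then show ?thesis using j(2) stage_Suc(2) by simp
qed

lemma stage_invariant:
  "(\<forall>m. 0 \<le> profile i m) \<and> (\<forall>m. m = 0 \<or> bound i < m \<longrightarrow> profile i m = 0) \<and> i \<le> bound i"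
proof (induction i)
  case (Suc i)
  have "bound i + 1 \<le> bound (Suc i)"
    using stage_Suc(2) blk_props(2)[of i] Max_S_blk_k(2)[of i] by simp
  moreover have "blk i m = 0" if "m = 0 \<or> bound (Suc i) < m" for m
  proof (rule ccontr)
    assume "blk i m \<noteq> 0"
    then show False using blk_support_range[OF blk_in_support] that by fastforce
  qed
  ultimately show ?case
    using Suc blk_nonneg[of i] by (auto simp: stage_Suc(1))
qed (simp add: stage_0)

lemma profile_nonneg: "0 \<le> profile i m"
  using stage_invariant by blast

lemma profile_support: "m = 0 \<or> bound i < m \<Longrightarrow> profile i m = 0"
  using stage_invariant by blast

lemma bound_ge: "i \<le> bound i"
  using stage_invariant by blast

lemma bound_mono: "i \<le> j \<Longrightarrow> bound i \<le> bound j"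
proof (rule incseqD[of bound])
  show "incseq bound"
  proof (rule incseq_SucI)
    fix i show "bound i \<le> bound (Suc i)"
      using stage_Suc(2)[of i] blk_props(2)[of i] by simp
  qed
qed

lemma horizon_good: "good_horizon i (horizon i) (profile (Suc i)) (bound (Suc i)) (horizon (Suc i))"
  unfolding stage_Suc(3) by (rule good_next_horizon) (rule profile_nonneg)

lemma horizon_Suc: "horizon i + 1 \<le> horizon (Suc i)" "i + 1 \<le> horizon (Suc i)"
  using horizon_good[of i] unfolding good_horizon_def by auto

lemma horizon_mono: "i \<le> j \<Longrightarrow> horizon i \<le> horizon j"
proof (rule incseqD[of horizon])
  show "incseq horizon"
  proof (rule incseq_SucI)
    fix i show "horizon i \<le> horizon (Suc i)"
      using horizon_Suc(1)[of i] by simp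
  qed
qed

lemma horizon_ge: "i \<le> horizon i"
  using horizon_Suc(2) by (cases i) auto

lemma sum_blk_support: "(\<Sum>m\<in>blk_support i. blk i m * v (m + n)) = blk_mass i n"
proof -
  have "(\<Sum>m\<in>blk_support i. blk i m * v (m + n)) = (\<Sum>j\<in>S (blk_k i). blk i (blk_s i + j) * v (blk_s i + j + n))"
    unfolding blk_support_def by (subst sum.reindex) (auto simp: inj_on_def)
  also have "\<dots> = (\<Sum>j\<in>S (blk_k i). blk_scale i / coeff_sum (blk_k i) (blk_s i) * (cmod (C (blk_k i) j) * v (blk_s i + n + j)))"
  proof (rule sum.cong)
    fix j assume "j \<in> S (blk_k i)"
    moreover from this have "1 \<le> j" using S_blk_k(3) by auto
    ultimately show "blk i (blk_s i + j) * v (blk_s i + j + n)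
        = blk_scale i / coeff_sum (blk_k i) (blk_s i) * (cmod (C (blk_k i) j) * v (blk_s i + n + j))"
      by (simp add: blk_def block_vec_def algebra_simps)
  qed simp
  also have "\<dots> = blk_mass i n"
    unfolding blk_mass_def coeff_sum_def by (simp add: sum_distrib_left sum_divide_distrib)
  finally show ?thesis .
qed

lemma blk_term_nonneg: "0 \<le> blk i m * v (m + n)"
proof (cases "blk i m = 0")
  case False
  then have "1 \<le> m" using blk_support_range[OF blk_in_support[OF False]] by auto
  then show ?thesis using blk_nonneg[of i m] v_pos[of "m + n"] by simp
qed simp

lemma sum_blk_le_blk_mass: "finite W \<Longrightarrow> (\<Sum>m\<in>W. blk i m * v (m + n)) \<le> blk_mass i n"
proof -
  assume "finite W"
  then have "(\<Sum>m\<in>W. blk i m * v (m + n)) = (\<Sum>m\<in>W \<inter> blk_support i. blk i m * v (m + n))"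
    using blk_in_support by (intro sum.mono_neutral_right) auto
  also have "\<dots> \<le> (\<Sum>m\<in>blk_support i. blk i m * v (m + n))"
    using finite_blk_support blk_term_nonneg by (intro sum_mono2) auto
  finally show ?thesis using sum_blk_support by simp
qed

text \<open>The factor \<open>M ^ horizon i\<close> in \<open>block_scale\<close> is what keeps block \<open>i\<close> from disturbing the
  orbit at the times \<open>n \<le> horizon i\<close> already taken care of.\<close>

lemma blk_mass_le: "n \<le> horizon i \<Longrightarrow> blk_mass i n \<le> 1 / 2 ^ (i + 1)"
proof -
  assume "n \<le> horizon i"
  let ?F = "coeff_sum (blk_k i)"
  have "0 < ?F (blk_s i)" using coeff_sum_pos[OF blk_props(1)] .
  have "?F (blk_s i + n) \<le> M ^ n * ?F (blk_s i)"
    using coeff_sum_add_le[OF blk_props(1)] .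
  also have "\<dots> \<le> M ^ horizon i * ?F (blk_s i)"
    using M_ge_1 \<open>n \<le> horizon i\<close> \<open>0 < ?F (blk_s i)\<close> by (intro mult_right_mono power_increasing) auto
  finally have "blk_mass i n \<le> blk_scale i * (M ^ horizon i * ?F (blk_s i)) / ?F (blk_s i)"
    unfolding blk_mass_def using blk_scale_pos[of i] \<open>0 < ?F (blk_s i)\<close>
    by (intro divide_right_mono mult_left_mono) auto
  also have "\<dots> = 1 / 2 ^ (i + 1)"
    unfolding blk_scale_def block_scale_def using \<open>0 < ?F (blk_s i)\<close> M_ge_1 by simp
  finally show ?thesis .
qed

lemma blk_mass_large:
  "(1 - 1 / real (i + 2)) * real (blk_len i) \<le> real (card {n \<in> {1..blk_len i}. real (i + 1) \<le> blk_mass i n})"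
proof -
  let ?F = "coeff_sum (blk_k i)"
  have "0 < ?F (blk_s i)" using coeff_sum_pos[OF blk_props(1)] .
  have "{n \<in> {1..blk_len i}. real (i + 1) / blk_scale i * ?F (blk_s i) \<le> ?F (blk_s i + n)}
      \<subseteq> {n \<in> {1..blk_len i}. real (i + 1) \<le> blk_mass i n}"
    using blk_scale_pos[of i] \<open>0 < ?F (blk_s i)\<close> by (auto simp: blk_mass_def field_simps)
  then have "card {n \<in> {1..blk_len i}. real (i + 1) / blk_scale i * ?F (blk_s i) \<le> ?F (blk_s i + n)}
      \<le> card {n \<in> {1..blk_len i}. real (i + 1) \<le> blk_mass i n}"
    by (intro card_mono) auto
  then show ?thesis using blk_props(4)[of i] by linarith
qed

lemma profile_decomp: "i \<le> T \<Longrightarrow> profile T m = profile i m + (\<Sum>i'\<in>{i..<T}. blk i' m)"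
  by (induction T rule: dec_induct) (auto simp: stage_Suc)

lemma blk_vanishes_below: "m \<le> bound T \<Longrightarrow> T \<le> i \<Longrightarrow> blk i m = 0"
proof (rule ccontr)
  assume "m \<le> bound T" "T \<le> i" "blk i m \<noteq> 0"
  then have "blk_s i < m" using blk_support_range[OF blk_in_support] by blast
  with \<open>m \<le> bound T\<close> show False
    using blk_props(2)[of i] bound_mono[OF \<open>T \<le> i\<close>] by simp
qed

text \<open>Every coordinate \<open>m\<close> is settled once \<open>m \<le> bound T\<close>, in particular from stage \<open>m\<close> on.\<close>

definition lim_profile :: "nat \<Rightarrow> real" where
  "lim_profile m = profile m m"

lemma lim_profile_eq: "m \<le> bound T \<Longrightarrow> lim_profile m = profile T m"
proof -
  have settled: "profile T'' m = profile T' m" if "m \<le> bound T'" "T' \<le> T''" for T' T''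
    using profile_decomp[OF that(2), of m] blk_vanishes_below[OF that(1)] by simp
  assume "m \<le> bound T"
  then show ?thesis
    using settled[of T "max T m"] settled[of m "max T m"] bound_ge[of m] unfolding lim_profile_def by simp
qed

lemma lim_profile_nonneg: "0 \<le> lim_profile m"
  unfolding lim_profile_def by (rule profile_nonneg)

lemma lim_profile_0: "lim_profile 0 = 0"
  unfolding lim_profile_def using profile_support by simp

lemma lim_profile_blk: "m \<in> blk_support i \<Longrightarrow> lim_profile m = blk i m"
proof -
  assume m: "m \<in> blk_support i"
  then have "blk_s i < m" "m \<le> bound (Suc i)" using blk_support_range by auto
  then show ?thesis
    using lim_profile_eq profile_support[of m i] blk_props(2)[of i] by (simp add: stage_Suc(1))
qed

lemma sum_profile_le_profile_mass:
  "(\<Sum>m<Q. profile i m * v (m + j)) \<le> profile_mass (profile i) (bound i) j"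
proof -
  have "(\<Sum>m<Q. profile i m * v (m + j)) = (\<Sum>m\<in>{..<Q} \<inter> {1..bound i}. profile i m * v (m + j))"
    using profile_support[of _ i] by (intro sum.mono_neutral_right) (auto simp: not_le)
  also have "\<dots> \<le> (\<Sum>m\<in>{1..bound i}. profile i m * v (m + j))"
    using profile_nonneg by (intro sum_mono2) (auto intro!: mult_nonneg_nonneg less_imp_le[OF v_pos])
  finally show ?thesis unfolding profile_mass_def .
qed

lemma sum_late_blks_le:
  assumes "j \<le> horizon i"
  shows "(\<Sum>i'\<in>{i..<T}. \<Sum>m<Q. blk i' m * v (m + j)) \<le> 1 / 2 ^ i"
proof -
  have "(\<Sum>i'\<in>{i..<T}. \<Sum>m<Q. blk i' m * v (m + j)) \<le> (\<Sum>i'\<in>{i..<T}. 1 / 2 ^ (i' + 1))"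
  proof (rule sum_mono)
    fix i' assume "i' \<in> {i..<T}"
    then have "j \<le> horizon i'" using assms horizon_mono[of i i'] by auto
    then show "(\<Sum>m<Q. blk i' m * v (m + j)) \<le> 1 / 2 ^ (i' + 1)"
      using sum_blk_le_blk_mass[of "{..<Q}" i' j] blk_mass_le[of j i'] by simp
  qed
  also have "\<dots> \<le> 1 / 2 ^ i"
    by (rule sum_inverse_two_powers_le)
  finally show ?thesis .
qed

lemma partial_sum_lim_profile_le:
  assumes "j \<le> horizon i"
  shows "(\<Sum>m<Q. lim_profile m * v (m + j)) \<le> profile_mass (profile i) (bound i) j + 1 / 2 ^ i"
proof -
  define T where "T = max Q i"
  have "lim_profile m = profile i m + (\<Sum>i'\<in>{i..<T}. blk i' m)" if "m < Q" for m
    using lim_profile_eq[of m T] bound_ge[of T] profile_decomp[of i T] that unfolding T_def by auto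
  then have "(\<Sum>m<Q. lim_profile m * v (m + j))
      = (\<Sum>m<Q. profile i m * v (m + j)) + (\<Sum>m<Q. (\<Sum>i'\<in>{i..<T}. blk i' m) * v (m + j))"
    by (simp add: distrib_right sum.distrib)
  also have "(\<Sum>m<Q. (\<Sum>i'\<in>{i..<T}. blk i' m) * v (m + j)) = (\<Sum>i'\<in>{i..<T}. \<Sum>m<Q. blk i' m * v (m + j))"
    by (subst sum.swap) (simp add: sum_distrib_right)
  finally have "(\<Sum>m<Q. lim_profile m * v (m + j))
      = (\<Sum>m<Q. profile i m * v (m + j)) + (\<Sum>i'\<in>{i..<T}. \<Sum>m<Q. blk i' m * v (m + j))" .
  then show ?thesis
    using sum_profile_le_profile_mass[where Q = Q and i = i and j = j]
      sum_late_blks_le[OF assms, where T = T and Q = Q] by linarith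
qed

lemma lim_profile_term_nonneg: "0 \<le> lim_profile m * v (m + j)"
  using lim_profile_0 lim_profile_nonneg[of m] v_pos[of "m + j"] by (cases m) auto

lemma summable_lim_profile: "summable (\<lambda>m. lim_profile m * v (m + j))"
  using partial_sum_lim_profile_le[of j j] horizon_ge[of j] lim_profile_term_nonneg
  by (intro summableI_nonneg_bounded) auto

lemma suminf_lim_profile_le:
  "j \<le> horizon i \<Longrightarrow> (\<Sum>m. lim_profile m * v (m + j)) \<le> profile_mass (profile i) (bound i) j + 1 / 2 ^ i"
  using summable_lim_profile partial_sum_lim_profile_le by (intro suminf_le_const) auto

definition xvec :: "nat \<Rightarrow> complex" where
  "xvec m = complex_of_real (lim_profile m powr (1 / p))"

lemma xvec_powr: "cmod (xvec m) powr p = lim_profile m"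
  using lim_profile_nonneg[of m] p_pos by (simp add: xvec_def powr_powr)

lemma xvec_lp: "xvec \<in> lp_space p v"
  using summable_lim_profile[of 0] lim_profile_0 by (simp add: lp_space_def xvec_powr) (simp add: xvec_def)

lemma orbit_pnorm_xvec: "orbit_pnorm p v xvec j = (\<Sum>m. lim_profile m * v (m + j))"
  unfolding orbit_pnorm_def by (simp add: xvec_powr)

lemma orbit_pnorm_xvec_small:
  assumes "j \<in> {1..horizon (Suc i)}" "profile_mass (profile (Suc i)) (bound (Suc i)) j < 1 / real (i + 1)"
  shows "orbit_pnorm p v xvec j \<le> 2 / real (i + 1)"
proof -
  have "orbit_pnorm p v xvec j \<le> profile_mass (profile (Suc i)) (bound (Suc i)) j + 1 / 2 ^ Suc i"
    unfolding orbit_pnorm_xvec using suminf_lim_profile_le[of j "Suc i"] assms(1) by auto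
  moreover have "real (i + 1) \<le> 2 ^ Suc i"
    by (metis Suc_eq_plus1 less_exp of_nat_le_iff of_nat_numeral of_nat_power less_imp_le_nat Suc_leI)
  then have "1 / 2 ^ Suc i \<le> 1 / real (i + 1)"
    by (simp add: frac_le)
  ultimately show ?thesis using assms(2) by simp
qed

lemma orbit_pnorm_plus_xvec_ge:
  assumes u: "u 0 = 0" "\<And>m. U < m \<Longrightarrow> u m = 0" and "U \<le> bound i"
  shows "cmod c powr p * blk_mass i n \<le> orbit_pnorm p v (\<lambda>m. u m + c * xvec m) n"
proof -
  have "(\<lambda>m. u m + c * xvec m) \<in> lp_space p v"
    using lp_space_add[OF lp_space_finite_support[of u U, OF u] lp_space_scale[OF xvec_lp]] .
  note le = sum_le_orbit_pnorm[OF this finite_blk_support, of n i]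
  have "(\<Sum>m\<in>blk_support i. cmod (u m + c * xvec m) powr p * v (m + n))
      = (\<Sum>m\<in>blk_support i. cmod c powr p * (blk i m * v (m + n)))"
  proof (rule sum.cong)
    fix m assume m: "m \<in> blk_support i"
    then have "u m = 0" using blk_support_range[OF m] blk_props(2)[of i] assms(3) u(2) by simp
    then show "cmod (u m + c * xvec m) powr p * v (m + n) = cmod c powr p * (blk i m * v (m + n))"
      using lim_profile_blk[OF m] xvec_powr[of m] by (simp add: norm_mult powr_mult)
  qed simp
  also have "\<dots> = cmod c powr p * blk_mass i n"
    by (simp only: sum_distrib_left[symmetric] sum_blk_support)
  finally show ?thesis
    using le by simp
qed

lemma orbit_pnorm_plus_xvec_large:
  assumes u: "u 0 = 0" "\<And>m. U < m \<Longrightarrow> u m = 0" and "c \<noteq> 0" and "0 < \<theta>"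
  shows "upper_dens {j. \<theta> \<le> orbit_pnorm p v (\<lambda>m. u m + c * xvec m) j} = 1"
proof (rule upper_dens_eq_1I[where N = blk_len and e = "\<lambda>i. 1 / real (Suc (Suc i))"])
  show "i \<le> blk_len i" for i
    using blk_props(3)[of i] by simp
  show "(\<lambda>i. 1 / real (Suc (Suc i))) \<longlonglongrightarrow> 0"
    using LIMSEQ_Suc[OF LIMSEQ_Suc[OF lim_const_over_n[of 1]]] by simp
  define cp where "cp = cmod c powr p"
  have "0 < cp" using \<open>c \<noteq> 0\<close> by (simp add: cp_def)
  have "(1 - 1 / real (Suc (Suc i))) * real (blk_len i)
      \<le> real (card ({j. \<theta> \<le> orbit_pnorm p v (\<lambda>m. u m + c * xvec m) j} \<inter> {1..blk_len i}))"
    if "max U (nat \<lceil>\<theta> / cp\<rceil>) \<le> i" for i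
  proof -
    have "{n \<in> {1..blk_len i}. real (i + 1) \<le> blk_mass i n}
        \<subseteq> {j. \<theta> \<le> orbit_pnorm p v (\<lambda>m. u m + c * xvec m) j} \<inter> {1..blk_len i}"
    proof safe
      fix n assume n: "real (i + 1) \<le> blk_mass i n"
      have "\<theta> \<le> cp * real (i + 1)"
        using that \<open>0 < cp\<close> by (simp add: field_simps)
      also have "\<dots> \<le> cp * blk_mass i n"
        using n \<open>0 < cp\<close> by simp
      also have "\<dots> \<le> orbit_pnorm p v (\<lambda>m. u m + c * xvec m) n"
        unfolding cp_def using bound_ge[of i] that by (intro orbit_pnorm_plus_xvec_ge u) auto
      finally show "\<theta> \<le> orbit_pnorm p v (\<lambda>m. u m + c * xvec m) n" .
    qed
    then have "card {n \<in> {1..blk_len i}. real (i + 1) \<le> blk_mass i n}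
        \<le> card ({j. \<theta> \<le> orbit_pnorm p v (\<lambda>m. u m + c * xvec m) j} \<inter> {1..blk_len i})"
      by (intro card_mono) auto
    then show ?thesis
      using blk_mass_large[of i] by simp
  qed
  then show "eventually (\<lambda>i. (1 - 1 / real (Suc (Suc i))) * real (blk_len i)
      \<le> real (card ({j. \<theta> \<le> orbit_pnorm p v (\<lambda>m. u m + c * xvec m) j} \<inter> {1..blk_len i}))) sequentially"
    unfolding eventually_sequentially by blast
qed

lemma orbit_pnorm_plus_xvec_small_at:
  assumes u: "u 0 = 0" "\<And>m. U < m \<Longrightarrow> u m = 0" and "0 < \<delta>"
    and v_small: "v j < \<delta> / (2 * 2 powr p * ((\<Sum>m\<in>{1..U}. cmod (u m) powr p * M ^ m) + 1))"
    and j: "j \<in> {1..horizon (Suc i)}" "profile_mass (profile (Suc i)) (bound (Suc i)) j < 1 / real (i + 1)"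
    and i: "4 * 2 powr p * cmod c powr p / \<delta> \<le> real (i + 1)"
  shows "orbit_pnorm p v (\<lambda>m. u m + c * xvec m) j < \<delta>"
proof -
  define cu where "cu = (\<Sum>m\<in>{1..U}. cmod (u m) powr p * M ^ m)"
  have "0 \<le> cu" unfolding cu_def using M_ge_1 by (intro sum_nonneg) auto
  have u_lp: "u \<in> lp_space p v" using lp_space_finite_support u by blast
  have "orbit_pnorm p v u j \<le> cu * v j"
    unfolding cu_def using j(1) by (intro orbit_pnorm_finite_support_le u) auto
  also have "\<dots> \<le> cu * (\<delta> / (2 * 2 powr p * (cu + 1)))"
    using v_small \<open>0 \<le> cu\<close> unfolding cu_def by (intro mult_left_mono) auto
  also have "\<dots> = \<delta> / (2 * 2 powr p) * (cu / (cu + 1))"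
    using \<open>0 \<le> cu\<close> by (simp add: field_simps)
  also have "\<dots> < \<delta> / (2 * 2 powr p) * 1"
    using \<open>0 \<le> cu\<close> \<open>0 < \<delta>\<close> by (intro mult_strict_left_mono) auto
  finally have u_small: "2 powr p * orbit_pnorm p v u j < \<delta> / 2"
    by (simp add: field_simps)
  have "cmod c powr p * orbit_pnorm p v xvec j \<le> cmod c powr p * (2 / real (i + 1))"
    using orbit_pnorm_xvec_small[OF j] by (intro mult_left_mono) auto
  also have "\<dots> \<le> \<delta> / (2 * 2 powr p)"
    using i \<open>0 < \<delta>\<close> by (simp add: field_simps)
  finally have x_small: "2 powr p * (cmod c powr p * orbit_pnorm p v xvec j) \<le> \<delta> / 2"
    by (simp add: field_simps)
  have "orbit_pnorm p v (\<lambda>m. u m + c * xvec m) j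
      \<le> 2 powr p * (orbit_pnorm p v u j + cmod c powr p * orbit_pnorm p v xvec j)"
    using orbit_pnorm_add_le[OF u_lp lp_space_scale[OF xvec_lp]] orbit_pnorm_scale[OF xvec_lp] by simp
  also have "\<dots> < \<delta>"
    using u_small x_small by (simp add: distrib_left)
  finally show ?thesis .
qed

lemma orbit_pnorm_plus_xvec_small:
  assumes u: "u 0 = 0" "\<And>m. U < m \<Longrightarrow> u m = 0" and "0 < \<delta>"
  shows "upper_dens {j. orbit_pnorm p v (\<lambda>m. u m + c * xvec m) j < \<delta>} = 1"
proof -
  let ?T = "{j. orbit_pnorm p v (\<lambda>m. u m + c * xvec m) j < \<delta>}"
  have "0 < \<delta> / (2 * 2 powr p * ((\<Sum>m\<in>{1..U}. cmod (u m) powr p * M ^ m) + 1))"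
    using \<open>0 < \<delta>\<close> M_ge_1 by (intro divide_pos_pos mult_pos_pos add_nonneg_pos sum_nonneg) auto
  then obtain n0 where n0: "\<And>n. n \<in> A \<Longrightarrow> n0 \<le> n
      \<Longrightarrow> v n < \<delta> / (2 * 2 powr p * ((\<Sum>m\<in>{1..U}. cmod (u m) powr p * M ^ m) + 1))"
    using v_vanishing_on_A by blast
  show ?thesis
  proof (rule upper_dens_eq_1I[where N = "\<lambda>i. horizon (Suc i)" and e = "\<lambda>i. real (Suc n0) / real (Suc i)"])
    show "i \<le> horizon (Suc i)" for i
      using horizon_Suc(2)[of i] by simp
    show "(\<lambda>i. real (Suc n0) / real (Suc i)) \<longlonglongrightarrow> 0"
      using LIMSEQ_Suc[OF lim_const_over_n] by simp
    have "(1 - real (Suc n0) / real (Suc i)) * real (horizon (Suc i)) \<le> real (card (?T \<inter> {1..horizon (Suc i)}))"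
      if i: "4 * 2 powr p * cmod c powr p / \<delta> \<le> real (i + 1)" for i
    proof -
      define X where "X = {j \<in> {1..horizon (Suc i)}. j \<in> A \<and>
        profile_mass (profile (Suc i)) (bound (Suc i)) j < 1 / real (i + 1)}"
      show ?thesis
      proof (rule card_Int_lower_bound)
        show "X \<subseteq> {1..horizon (Suc i)}" by (auto simp: X_def)
        show "X \<inter> {n0<..} \<subseteq> ?T"
          using orbit_pnorm_plus_xvec_small_at[OF u \<open>0 < \<delta>\<close> n0 _ _ i] by (auto simp: X_def)
        show "Suc i \<le> horizon (Suc i)"
          using horizon_Suc(2)[of i] by simp
        show "(1 - 1 / real (Suc i)) * real (horizon (Suc i)) \<le> real (card X)"
          using horizon_good[of i] unfolding good_horizon_def X_def by simp
      qed
    qed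
    then show "eventually (\<lambda>i. (1 - real (Suc n0) / real (Suc i)) * real (horizon (Suc i))
        \<le> real (card (?T \<inter> {1..horizon (Suc i)}))) sequentially"
      unfolding eventually_sequentially
      by (meson nat_ceiling_le_eq order.trans of_nat_le_iff le_add1 real_nat_ceiling_ge)
  qed
qed

end

section \<open>A dense scrambled set\<close>

context dc_construction
begin

definition dense_part :: "nat \<Rightarrow> nat \<Rightarrow> complex" where
  "dense_part q = embed_rat_list (from_nat (fst (prod_decode q)))"

definition weight :: "nat \<Rightarrow> real" where
  "weight q = 1 / real (q + 2)"

definition scrambled_set :: "(nat \<Rightarrow> complex) set" where
  "scrambled_set = (\<lambda>t m. complex_of_real t * xvec m) ` {1<..<2}
     \<union> range (\<lambda>q m. dense_part q m + complex_of_real (weight q) * xvec m)"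

lemma scrambled_set_subset: "scrambled_set \<subseteq> lp_space p v"
  unfolding scrambled_set_def dense_part_def
  using lp_space_scale[OF xvec_lp] lp_space_add[OF embed_rat_list_lp lp_space_scale[OF xvec_lp]] by auto

lemma xvec_nonzero: "xvec \<noteq> (\<lambda>m. 0)"
proof
  assume "xvec = (\<lambda>m. 0)"
  then have "orbit_pnorm p v (\<lambda>m. 0 + 1 * xvec m) j = 0" for j
    by (simp add: orbit_pnorm_def)
  moreover have "upper_dens {j. 1 \<le> orbit_pnorm p v (\<lambda>m. 0 + 1 * xvec m) j} = 1"
    by (rule orbit_pnorm_plus_xvec_large[of _ 0]) auto
  ultimately show False
    using upper_dens_eq_1_nonempty by fastforce
qed

lemma scrambled_set_uncountable: "uncountable scrambled_set"
proof
  assume "countable scrambled_set"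
  obtain m0 where "xvec m0 \<noteq> 0" using xvec_nonzero by auto
  have "inj_on (\<lambda>t m. complex_of_real t * xvec m) {1<..<2}"
    using \<open>xvec m0 \<noteq> 0\<close> by (intro inj_onI) (metis mult_cancel_right of_real_eq_iff)
  moreover have "countable ((\<lambda>t m. complex_of_real t * xvec m) ` {1<..<2::real})"
    using \<open>countable scrambled_set\<close> unfolding scrambled_set_def by (rule countable_subset[rotated]) auto
  ultimately have "countable {1<..<2::real}"
    by (rule countable_image_inj_on[rotated])
  then show False
    using uncountable_open_interval[of 1 2] by simp
qed

lemma scrambled_set_memE:
  assumes "g \<in> scrambled_set"
  obtains d t where "g = (\<lambda>m. d m + complex_of_real t * xvec m)" "d 0 = 0" "\<exists>U. \<forall>m>U. d m = 0"
    "d = (\<lambda>m. 0) \<and> t \<in> {1<..<2} \<or> (\<exists>q. d = dense_part q \<and> t = weight q)"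
proof -
  from assms consider (scaled) t where "t \<in> {1<..<2}" "g = (\<lambda>m. complex_of_real t * xvec m)"
    | (shifted) q where "g = (\<lambda>m. dense_part q m + complex_of_real (weight q) * xvec m)"
    unfolding scrambled_set_def by auto
  then show thesis
  proof cases
    case scaled
    then show thesis using that[of "\<lambda>m. 0" t] by auto
  next
    case shifted
    have "\<exists>U. \<forall>m>U. dense_part q m = 0"
      by (intro exI[of _ "length (from_nat (fst (prod_decode q)) :: (rat \<times> rat) list)"])
        (simp add: dense_part_def embed_rat_list_def)
    moreover have "dense_part q 0 = 0"
      by (simp add: dense_part_def embed_rat_list_def)
    ultimately show thesis
      using that[of "dense_part q" "weight q"] shifted by blast
  qed
qed

lemma scrambled_set_diff:
  assumes "g1 \<in> scrambled_set" "g2 \<in> scrambled_set" "g1 \<noteq> g2"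
  obtains u U c where "u 0 = 0" "\<And>m. U < m \<Longrightarrow> u m = 0" "c \<noteq> 0" "g1 - g2 = (\<lambda>m. u m + c * xvec m)"
proof -
  obtain d1 t1 where g1: "g1 = (\<lambda>m. d1 m + complex_of_real t1 * xvec m)" "d1 0 = 0" "\<exists>U. \<forall>m>U. d1 m = 0"
    "d1 = (\<lambda>m. 0) \<and> t1 \<in> {1<..<2} \<or> (\<exists>q. d1 = dense_part q \<and> t1 = weight q)"
    using assms(1) by (rule scrambled_set_memE)
  obtain d2 t2 where g2: "g2 = (\<lambda>m. d2 m + complex_of_real t2 * xvec m)" "d2 0 = 0" "\<exists>U. \<forall>m>U. d2 m = 0"
    "d2 = (\<lambda>m. 0) \<and> t2 \<in> {1<..<2} \<or> (\<exists>q. d2 = dense_part q \<and> t2 = weight q)"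
    using assms(2) by (rule scrambled_set_memE)
  have weight_lt_1: "weight q < 1" for q by (simp add: weight_def)
  have "t1 \<noteq> t2"
  proof
    assume "t1 = t2"
    with g1(4) g2(4) weight_lt_1 have "d1 = d2"
      by (auto simp: weight_def)
    with \<open>t1 = t2\<close> g1(1) g2(1) assms(3) show False by simp
  qed
  obtain U1 U2 where "\<forall>m>U1. d1 m = 0" "\<forall>m>U2. d2 m = 0" using g1(3) g2(3) by blast
  then show thesis
    using that[of "\<lambda>m. d1 m - d2 m" "max U1 U2" "complex_of_real (t1 - t2)"] g1(1,2) g2(1,2) \<open>t1 \<noteq> t2\<close>
    by (auto simp: fun_eq_iff algebra_simps)
qed

lemma dense_part_weight_approx:
  assumes "0 < \<rho>"
  obtains q where "dense_part q = embed_rat_list l" "weight q \<le> \<rho>"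
proof -
  obtain r where r: "inverse (real (Suc r)) < \<rho>" using reals_Archimedean[OF assms] by blast
  define q where "q = prod_encode (to_nat l, r)"
  have "r \<le> q" unfolding q_def by (rule le_prod_encode_2)
  then have "weight q \<le> 1 / real (Suc r)"
    unfolding weight_def by (intro divide_left_mono) auto
  with r have "weight q \<le> \<rho>"
    by (simp add: inverse_eq_divide)
  moreover have "dense_part q = embed_rat_list l" unfolding dense_part_def q_def by simp
  ultimately show thesis by (rule that[rotated])
qed

lemma scrambled_set_dense:
  assumes y: "y \<in> lp_space p v" and "0 < e"
  shows "\<exists>g\<in>scrambled_set. lp_norm p v (y - g) < e"
proof -
  define E where "E = e powr p / (2 * 2 powr p)"
  have "0 < E" using \<open>0 < e\<close> by (simp add: E_def)
  obtain l where l: "orbit_pnorm p v (y - embed_rat_list l) 0 < E"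
    using lp_space_rat_approx[OF y \<open>0 < E\<close>] by blast
  define \<phi> where "\<phi> = orbit_pnorm p v xvec 0"
  have "0 \<le> \<phi>" unfolding \<phi>_def by (rule orbit_pnorm_nonneg[OF xvec_lp])
  define \<rho> where "\<rho> = (E / (\<phi> + 1)) powr (1 / p)"
  have "0 < \<rho>" using \<open>0 < E\<close> \<open>0 \<le> \<phi>\<close> by (simp add: \<rho>_def)
  then obtain q where q: "dense_part q = embed_rat_list l" "weight q \<le> \<rho>"
    by (rule dense_part_weight_approx)
  define g where "g = (\<lambda>m. dense_part q m + complex_of_real (weight q) * xvec m)"
  have "g \<in> scrambled_set" unfolding scrambled_set_def g_def by auto
  have "0 \<le> weight q" by (simp add: weight_def)
  have "weight q powr p * \<phi> \<le> \<rho> powr p * \<phi>"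
    using q(2) \<open>0 \<le> weight q\<close> \<open>0 \<le> \<phi>\<close> p_pos by (intro mult_right_mono powr_mono2) auto
  also have "\<rho> powr p * \<phi> = E * (\<phi> / (\<phi> + 1))"
    using \<open>0 < E\<close> \<open>0 \<le> \<phi>\<close> p_pos by (simp add: \<rho>_def powr_powr)
  also have "\<dots> < E"
    using \<open>0 < E\<close> \<open>0 \<le> \<phi>\<close> by (simp add: field_simps)
  finally have "orbit_pnorm p v (y - embed_rat_list l) 0 + weight q powr p * \<phi> < E + E"
    using l by simp
  then have "orbit_pnorm p v (y - g) 0 < 2 powr p * (E + E)"
    using orbit_pnorm_sub_add_le[OF y embed_rat_list_lp xvec_lp \<open>0 \<le> weight q\<close>, of l 0]
    unfolding g_def q(1) \<phi>_def by (smt (verit) mult_strict_left_mono powr_gt_zero)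
  also have "2 powr p * (E + E) = e powr p"
    by (simp add: E_def field_simps)
  finally have "lp_norm p v (y - g) < e"
    using lp_norm_orbit_diff_less_iff[OF y _ \<open>0 < e\<close>, of g 0] \<open>g \<in> scrambled_set\<close> scrambled_set_subset by auto
  with \<open>g \<in> scrambled_set\<close> show ?thesis by blast
qed

lemma densely_distr_chaotic: "densely_distr_chaotic (lp_space p v) fwd_shift (lp_norm p v)"
proof -
  have "distr_irregular p v (g1 - g2) (1 powr p)"
    if g: "g1 \<in> scrambled_set" "g2 \<in> scrambled_set" "g1 \<noteq> g2" for g1 g2
  proof -
    obtain u U c where "u 0 = 0" "\<And>m. U < m \<Longrightarrow> u m = 0" "c \<noteq> 0" "g1 - g2 = (\<lambda>m. u m + c * xvec m)"
      using scrambled_set_diff[OF g] by blast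
    then show ?thesis
      unfolding distr_irregular_def
      using orbit_pnorm_plus_xvec_small[of u U] orbit_pnorm_plus_xvec_large[of u U c 1] by simp
  qed
  then have "dc_set fwd_shift (lp_norm p v) scrambled_set 1"
    using dc_set_iff_distr_irregular[OF scrambled_set_subset] scrambled_set_uncountable by simp
  then show ?thesis
    unfolding densely_distr_chaotic_def using scrambled_set_subset scrambled_set_dense by blast
qed

end

lemma (in weighted_shift) dc_criterion_imp_densely_distr_chaotic:
  assumes "dc_criterion v"
  shows "densely_distr_chaotic (lp_space p v) fwd_shift (lp_norm p v)"
proof -
  from assms obtain S A \<epsilon> N C where
    "\<forall>k\<ge>1. finite (S k) \<and> S k \<noteq> {} \<and> S k \<subseteq> {1..}"
    "upper_dens A = 1" "\<forall>e>0. \<exists>n0. \<forall>n\<in>A. n \<ge> n0 \<longrightarrow> v n < e"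
    "\<epsilon> > 0" "N 1 \<ge> 1" "\<forall>k\<ge>1. N k < N (k + 1)" "\<forall>k\<ge>1. \<forall>j\<in>S k. C k j \<noteq> 0"
    "\<forall>k\<ge>1. real (card {n \<in> {1..N k}. (\<Sum>j\<in>S k. cmod (C k j) * v (n + j)) / (\<Sum>j\<in>S k. cmod (C k j) * v j)
       \<ge> real k}) \<ge> real (N k) * \<epsilon>"
    unfolding dc_criterion_def vanishes_along_dense_set_def ratio_blocks_def by blast
  then interpret dc_construction p v M S A \<epsilon> N C
    by unfold_locales auto
  show ?thesis
    by (rule densely_distr_chaotic)
qed

theorem mainTheorem12:
  fixes p :: real and v :: "nat \<Rightarrow> real"
  assumes "1 \<le> p"
    and "\<And>n. n \<ge> 1 \<Longrightarrow> v n > 0"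
    and "\<exists>M. \<forall>n\<ge>1. v (n + 1) / v n \<le> M"
  shows "(distr_chaotic (lp_space p v) fwd_shift (lp_norm p v)
            \<longleftrightarrow> densely_distr_chaotic (lp_space p v) fwd_shift (lp_norm p v))
       \<and> (distr_chaotic (lp_space p v) fwd_shift (lp_norm p v)
            \<longleftrightarrow> (\<exists>S :: nat \<Rightarrow> nat set.
                  (\<forall>k\<ge>1. finite (S k) \<and> S k \<noteq> {} \<and> S k \<subseteq> {1..})
                \<and> (\<exists>A. A \<subseteq> {1..} \<and> upper_dens A = 1 \<and>
                     (\<forall>e>0. \<exists>n0. \<forall>n\<in>A. n \<ge> n0 \<longrightarrow> v n < e))
                \<and> (\<exists>\<epsilon>>0. \<exists>N :: nat \<Rightarrow> nat. \<exists>C :: nat \<Rightarrow> nat \<Rightarrow> complex.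
                     N 1 \<ge> 1 \<and> (\<forall>k\<ge>1. N k < N (k + 1))
                   \<and> (\<forall>k\<ge>1. \<forall>j\<in>S k. C k j \<noteq> 0)
                   \<and> (\<forall>k\<ge>1. real (card {n \<in> {1..N k}.
                          (\<Sum>j\<in>S k. cmod (C k j) * v (n + j)) / (\<Sum>j\<in>S k. cmod (C k j) * v j)
                            \<ge> real k}) \<ge> real (N k) * \<epsilon>))))"
proof -
  obtain M where "weighted_shift p v M"
    using weighted_shift_exists[OF assms] ..
  then interpret weighted_shift p v M .
  have "distr_chaotic (lp_space p v) fwd_shift (lp_norm p v) \<Longrightarrow> dc_criterion v"
    by (rule distr_chaotic_imp_dc_criterion)
  moreover have "dc_criterion v \<Longrightarrow> densely_distr_chaotic (lp_space p v) fwd_shift (lp_norm p v)"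
    by (rule dc_criterion_imp_densely_distr_chaotic)
  moreover have "densely_distr_chaotic (lp_space p v) fwd_shift (lp_norm p v)
      \<Longrightarrow> distr_chaotic (lp_space p v) fwd_shift (lp_norm p v)"
    by (rule densely_distr_chaotic_imp_distr_chaotic)
  ultimately have "(distr_chaotic (lp_space p v) fwd_shift (lp_norm p v)
      \<longleftrightarrow> densely_distr_chaotic (lp_space p v) fwd_shift (lp_norm p v))
    \<and> (distr_chaotic (lp_space p v) fwd_shift (lp_norm p v) \<longleftrightarrow> dc_criterion v)"
    by blast
  then show ?thesis
    unfolding dc_criterion_def vanishes_along_dense_set_def ratio_blocks_def .
qed

end
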